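(* Let $\mathbb{K}$ be an ultrametric field and $\rho\in\mathbb{K}$ with $0<|\rho|<1$. Let $E$ be a metrizable (Hausdorff) topological $\mathbb{K}$-vector space, $U\subseteq E$ open, $x\in U$, and let $(x_n)_{n\in\mathbb{N}}$ and $(y_n)_{n\in\mathbb{N}}$ be sequences in $U$ converging to $x$. Then there exist an injective, monotonically increasing map $m\colon\mathbb{N}\to\mathbb{N}$, $k\mapsto m_k$, and a smooth curve $c\colon\mathbb{K}\to E$ with image in $U$ such that: (a) $c(\rho^k)=x_{m_k}$ for all odd $k\in\mathbb{N}$ and $c(\rho^k)=y_{m_k}$ for all even $k\in\mathbb{N}$; (b) $c(0)=x$; (c) $c|_{\mathbb{K}^\times}$ is locally constant; (d) if $t,s\in\mathbb{K}$ with $|t|=|s|$ then $c(t)=c(s)$; (e) $c(\mathbb{K}^\times)=\{c(\rho^k):k\in\mathbb{N}\}$.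
   Context: An ultrametric field is a field with a non-trivial absolute value satisfying $|x+y|\le\max\{|x|,|y|\}$. $\mathbb{N}=\{1,2,\dots\}$. Smoothness: for open $V$ in a topological $\mathbb{K}$-vector space $X$, $V^{[1]}:=\{(x,v,t)\in V\times X\times\mathbb{K}:x+tv\in V\}$; $g\colon V\to Y$ is $C^1$ if continuous and there is a continuous $g^{[1]}\colon V^{[1]}\to Y$ with $g(x+tv)-g(x)=t\,g^{[1]}(x,v,t)$; recursively $V^{[k+1]}=(V^{[k]})^{[1]}$, $g$ is $C^{k+1}$ if $C^k$ and $g^{[k]}$ is $C^1$, $g^{[k+1]}=(g^{[k]})^{[1]}$; smooth means $C^k$ for all $k$ (product topologies used). *)

theory Defs
  imports "HOL-Analysis.Analysis"
begin

definition ultrametric_abs :: "('k::field \<Rightarrow> real) \<Rightarrow> bool" where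
  "ultrametric_abs av \<longleftrightarrow>
     (\<forall>x. 0 \<le> av x) \<and> (\<forall>x. av x = 0 \<longleftrightarrow> x = 0) \<and>
     (\<forall>x y. av (x * y) = av x * av y) \<and>
     (\<forall>x y. av (x + y) \<le> max (av x) (av y)) \<and>
     (\<exists>x. av x \<noteq> 0 \<and> av x \<noteq> 1)"

definition abs_topology :: "('k::field \<Rightarrow> real) \<Rightarrow> 'k topology" where
  "abs_topology av = topology (\<lambda>S. \<forall>x\<in>S. \<exists>r>0. \<forall>y. av (y - x) < r \<longrightarrow> y \<in> S)"

definition metrizable_tvs ::
  "('k::field \<Rightarrow> real) \<Rightarrow> ('k \<Rightarrow> 'e::ab_group_add \<Rightarrow> 'e) \<Rightarrow> 'e topology \<Rightarrow> bool" where
  "metrizable_tvs av sc TE \<longleftrightarrow>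
     vector_space sc \<and> topspace TE = UNIV \<and>
     continuous_map (prod_topology TE TE) TE (\<lambda>(x, y). x + y) \<and>
     continuous_map (prod_topology (abs_topology av) TE) TE (\<lambda>(t, v). sc t v) \<and>
     Hausdorff_space TE \<and> metrizable_space TE"

text \<open>Points of K^n are lists of length n; max-distance (product topology).\<close>
definition ldist :: "('k::field \<Rightarrow> real) \<Rightarrow> 'k list \<Rightarrow> 'k list \<Rightarrow> real" where
  "ldist av xs ys = Max (set (0 # map2 (\<lambda>x y. av (x - y)) xs ys))"

definition cont_on :: "('k::field \<Rightarrow> real) \<Rightarrow> 'e topology \<Rightarrow> 'k list set \<Rightarrow> ('k list \<Rightarrow> 'e) \<Rightarrow> bool" where
  "cont_on av TE D f \<longleftrightarrow>
     (\<forall>x\<in>D. \<forall>W. openin TE W \<and> f x \<in> W \<longrightarrow>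
        (\<exists>r>0. \<forall>y\<in>D. ldist av x y < r \<longrightarrow> f y \<in> W))"

text \<open>V^[1] = {(x,v,t). x \<in> V, x + t v \<in> V}, encoded as x @ v @ [t].\<close>
definition dom1 :: "'k::field list set \<Rightarrow> 'k list set" where
  "dom1 V = {xs @ vs @ [t] | xs vs t. xs \<in> V \<and> length vs = length xs \<and>
                                  map2 (\<lambda>x v. x + t * v) xs vs \<in> V}"

fun cdom :: "nat \<Rightarrow> 'k::field list set" where
  "cdom 0 = {xs. length xs = 1}"
| "cdom (Suc k) = dom1 (cdom k)"

definition smooth_curve ::
  "('k::field \<Rightarrow> real) \<Rightarrow> ('k \<Rightarrow> 'e::ab_group_add \<Rightarrow> 'e) \<Rightarrow> 'e topology \<Rightarrow> ('k \<Rightarrow> 'e) \<Rightarrow> bool" where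
  "smooth_curve av sc TE c \<longleftrightarrow>
     (\<exists>G :: nat \<Rightarrow> 'k list \<Rightarrow> 'e.
        (\<forall>t. G 0 [t] = c t) \<and>
        (\<forall>k. cont_on av TE (cdom k) (G k)) \<and>
        (\<forall>k xs vs t. xs @ vs @ [t] \<in> cdom (Suc k) \<and> length vs = length xs \<longrightarrow>
            G k (map2 (\<lambda>x v. x + t * v) xs vs) - G k xs = sc t (G (Suc k) (xs @ vs @ [t]))))"

end

(*
  The curve is c(t) = x at t = 0 and c(t) = z_k on the shell |rho|^(k+1) < |t| <= |rho|^k,
  where z_k alternates between x_(m_k) and y_(m_k) and m_k is chosen so large that z_k - x,
  even multiplied by any scalar of absolute value at most |rho|^(-k(k+1)), lies in the k-th
  member of a countable neighbourhood basis of 0.  Properties (a)-(e) are then immediate, and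
  h = c - x is radial (it depends only on |t|) and flat at 0: lambda h(w) tends to 0 as w tends
  to 0 whenever |lambda| |w|^j <= 1.

  The iterated difference quotients of t |-> x + h(t) are finite sums of terms
  p(w) h[q_0(w), ..., q_n(w)] with polynomials p, q_i and divided differences h[...]; this
  class is closed under taking difference quotients.  Ultrametricity makes divided differences
  of a radial map tractable: defined by dividing by t_a - t_b for |t_b| < |t_a| maximal, they
  satisfy the recursion for every pair of points, vanish on points of equal absolute value, and
  an n-th divided difference is a sum of at most 2^n terms lambda h(w) with |lambda| |w|^n <= 1.
  Hence divided differences are continuous: by the recursion away from points of equal absolute
  value, as they are locally zero near nonzero such points, and by flatness near 0.
*)
theory Submission
  imports Defs
begin

section \<open>Ultrametric absolute values\<close>

lemma istopology_abs_open:
  "istopology (\<lambda>S. \<forall>x\<in>S. \<exists>r>0. \<forall>y. (av :: 'k::field \<Rightarrow> real) (y - x) < r \<longrightarrow> y \<in> S)"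
  unfolding istopology_def
proof (intro conjI allI impI)
  fix S T assume S: "\<forall>x\<in>S. \<exists>r>0. \<forall>y. av (y - x) < r \<longrightarrow> y \<in> S"
    and T: "\<forall>x\<in>T. \<exists>r>0. \<forall>y. av (y - x) < r \<longrightarrow> y \<in> T"
  show "\<forall>x\<in>S \<inter> T. \<exists>r>0. \<forall>y. av (y - x) < r \<longrightarrow> y \<in> S \<inter> T"
  proof
    fix x assume "x \<in> S \<inter> T"
    then obtain r1 r2 where "r1 > 0" "\<forall>y. av (y - x) < r1 \<longrightarrow> y \<in> S"
      and "r2 > 0" "\<forall>y. av (y - x) < r2 \<longrightarrow> y \<in> T"
      using S T by blast
    then show "\<exists>r>0. \<forall>y. av (y - x) < r \<longrightarrow> y \<in> S \<inter> T"
      by (intro exI[of _ "min r1 r2"]) auto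
  qed
next
  fix K assume K: "\<forall>S\<in>K. \<forall>x\<in>S. \<exists>r>0. \<forall>y. av (y - x) < r \<longrightarrow> y \<in> S"
  show "\<forall>x\<in>\<Union>K. \<exists>r>0. \<forall>y. av (y - x) < r \<longrightarrow> y \<in> \<Union>K"
  proof
    fix x assume "x \<in> \<Union>K"
    then obtain S where "S \<in> K" "x \<in> S"
      by blast
    then obtain r where "r > 0" "\<forall>y. av (y - x) < r \<longrightarrow> y \<in> S"
      using K by blast
    then show "\<exists>r>0. \<forall>y. av (y - x) < r \<longrightarrow> y \<in> \<Union>K"
      using \<open>S \<in> K\<close> by blast
  qed
qed

lemma openin_abs_topology:
  "openin (abs_topology av) S \<longleftrightarrow> (\<forall>x\<in>S. \<exists>r>0. \<forall>y. av (y - x) < r \<longrightarrow> y \<in> S)"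
  unfolding abs_topology_def topology_inverse'[OF istopology_abs_open] ..

lemma topspace_abs_topology [simp]: "topspace (abs_topology av) = UNIV"
proof -
  have "openin (abs_topology av) UNIV"
    unfolding openin_abs_topology by (auto intro: exI[of _ 1])
  then show ?thesis
    using openin_subset by blast
qed

locale ultrametric_absval =
  fixes av :: "'k::field \<Rightarrow> real"
  assumes ultrametric: "ultrametric_abs av"
begin

lemma av_nonneg: "0 \<le> av x"
  and av_eq_0_iff [simp]: "av x = 0 \<longleftrightarrow> x = 0"
  and av_mult: "av (x * y) = av x * av y"
  and av_add_le_max: "av (x + y) \<le> max (av x) (av y)"
  and av_nontrivial: "\<exists>x. av x \<noteq> 0 \<and> av x \<noteq> 1"
  using ultrametric unfolding ultrametric_abs_def by blast+

lemma av_0 [simp]: "av 0 = 0"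
  by simp

lemma av_pos: "x \<noteq> 0 \<Longrightarrow> 0 < av x"
  using av_nonneg[of x] av_eq_0_iff[of x] by linarith

lemma av_1 [simp]: "av 1 = 1"
  using av_mult[of 1 1] by simp

lemma av_minus [simp]: "av (- x) = av x"
proof -
  have "av (-1) * av (-1) = 1"
    using av_mult[of "-1" "-1"] by simp
  then have "(av (-1) - 1) * (av (-1) + 1) = 0"
    by (simp add: algebra_simps)
  moreover have "av (-1) + 1 \<noteq> 0"
    using av_nonneg[of "-1"] by linarith
  ultimately have "av (-1) = 1"
    by simp
  then show ?thesis
    using av_mult[of "-1" x] by simp
qed

lemma av_minus_commute: "av (x - y) = av (y - x)"
  by (metis av_minus minus_diff_eq)

lemma av_inverse: "av (inverse x) = inverse (av x)"
proof (cases "x = 0")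
  case False
  then have "av x * av (inverse x) = 1"
    using av_mult[of x "inverse x"] by simp
  then show ?thesis
    using inverse_unique[of "av x" "av (inverse x)"] by simp
qed simp

lemma av_divide: "av (x / y) = av x / av y"
  by (simp add: divide_inverse av_mult av_inverse)

lemma av_power: "av (x ^ n) = av x ^ n"
  by (induction n) (simp_all add: av_mult)

lemma av_add_dominant: "av y < av x \<Longrightarrow> av (x + y) = av x"
  using av_add_le_max[of x y] av_add_le_max[of "x + y" "- y"] by auto

lemma av_diff_dominant: "av y < av x \<Longrightarrow> av (x - y) = av x"
  using av_add_dominant[of "- y" x] by simp

lemma av_eq_if_close: "av (y - x) < av x \<Longrightarrow> av y = av x"
  using av_add_dominant[of "y - x" x] by simp

lemma av_less_if_close: "av (y - x) < r \<Longrightarrow> av x < r \<Longrightarrow> av y < r"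
  using av_add_le_max[of x "y - x"] by simp

lemma exists_small_nonzero:
  assumes "e > 0"
  obtains c where "c \<noteq> 0" "av c < e"
proof -
  obtain x where x: "av x \<noteq> 0" "av x \<noteq> 1"
    using av_nontrivial by blast
  define \<rho> where "\<rho> = (if av x < 1 then x else inverse x)"
  have "0 < av \<rho> \<and> av \<rho> < 1"
  proof (cases "av x < 1")
    case True
    then show ?thesis
      using x av_pos[of x] by (simp add: \<rho>_def)
  next
    case False
    then have "1 < av x"
      using x(2) by simp
    then show ?thesis
      using False by (simp add: \<rho>_def av_inverse inverse_less_1_iff)
  qed
  then obtain n where "av \<rho> ^ n < e"
    using real_arch_pow_inv assms by blast
  moreover have "\<rho> \<noteq> 0"
    using \<open>0 < av \<rho> \<and> av \<rho> < 1\<close> by auto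
  ultimately show thesis
    using that[of "\<rho> ^ n"] by (simp add: av_power)
qed

end

section \<open>Continuity in the coordinates\<close>

definition coords_close :: "('k::field \<Rightarrow> real) \<Rightarrow> real \<Rightarrow> 'k list \<Rightarrow> 'k list \<Rightarrow> bool" where
  "coords_close av r a b \<longleftrightarrow> list_all2 (\<lambda>x y. av (y - x) < r) a b"

definition cont_at :: "('k::field \<Rightarrow> real) \<Rightarrow> 'e topology \<Rightarrow> ('k list \<Rightarrow> 'e) \<Rightarrow> 'k list \<Rightarrow> bool" where
  "cont_at av X f u0 \<longleftrightarrow>
     (\<forall>W. openin X W \<longrightarrow> f u0 \<in> W \<longrightarrow> (\<exists>r>0. \<forall>u. coords_close av r u0 u \<longrightarrow> f u \<in> W))"

definition scalar_cont_at :: "('k::field \<Rightarrow> real) \<Rightarrow> ('k list \<Rightarrow> 'k) \<Rightarrow> 'k list \<Rightarrow> bool" where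
  "scalar_cont_at av p u0 \<longleftrightarrow> (\<forall>e>0. \<exists>r>0. \<forall>u. coords_close av r u0 u \<longrightarrow> av (p u - p u0) < e)"

definition remove_nth :: "nat \<Rightarrow> 'a list \<Rightarrow> 'a list" where
  "remove_nth l u = take l u @ drop (Suc l) u"

lemma coords_close_iff:
  "coords_close av r a b \<longleftrightarrow> length b = length a \<and> (\<forall>i<length a. av (b ! i - a ! i) < r)"
  unfolding coords_close_def list_all2_conv_all_nth by auto

lemma coords_close_mono: "coords_close av r a b \<Longrightarrow> r \<le> r' \<Longrightarrow> coords_close av r' a b"
  unfolding coords_close_def by (erule list_all2_mono) simp

lemma coords_close_min:
  "coords_close av (min r r') a b \<Longrightarrow> coords_close av r a b \<and> coords_close av r' a b"
  by (auto elim: coords_close_mono)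

lemma coords_close_remove_nth:
  "coords_close av r a b \<Longrightarrow> coords_close av r (remove_nth l a) (remove_nth l b)"
  unfolding coords_close_def remove_nth_def
  by (intro list_all2_appendI list_all2_takeI list_all2_dropI)

lemma mset_remove_nth: "i < length u \<Longrightarrow> mset (remove_nth i u) = mset u - {#u ! i#}"
  unfolding remove_nth_def by (subst (2) id_take_nth_drop[of i u]) auto

lemma length_remove_nth: "i < length u \<Longrightarrow> length (remove_nth i u) = length u - 1"
  unfolding remove_nth_def by simp

lemma cont_atI:
  assumes "\<And>W. openin X W \<Longrightarrow> f u0 \<in> W \<Longrightarrow> \<exists>r>0. \<forall>u. coords_close av r u0 u \<longrightarrow> f u \<in> W"
  shows "cont_at av X f u0"
  using assms unfolding cont_at_def by blast

lemma cont_atE: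
  assumes "cont_at av X f u0" "openin X W" "f u0 \<in> W"
  obtains r where "r > 0" "\<And>u. coords_close av r u0 u \<Longrightarrow> f u \<in> W"
  using assms unfolding cont_at_def by blast

lemma scalar_cont_atE:
  assumes "scalar_cont_at av p u0" "e > 0"
  obtains r where "r > 0" "\<And>u. coords_close av r u0 u \<Longrightarrow> av (p u - p u0) < e"
  using assms unfolding scalar_cont_at_def by blast

lemma cont_at_const: "cont_at av X (\<lambda>u. e) u0"
  by (rule cont_atI) (auto intro: exI[of _ 1])

lemma cont_at_compose:
  assumes "cont_at av X g (d u0)"
    and "\<And>e. e > 0 \<Longrightarrow> \<exists>r>0. \<forall>u. coords_close av r u0 u \<longrightarrow> coords_close av e (d u0) (d u)"
  shows "cont_at av X (\<lambda>u. g (d u)) u0"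
proof (rule cont_atI)
  fix W assume "openin X W" "g (d u0) \<in> W"
  then obtain e where e: "e > 0" "\<And>v. coords_close av e (d u0) v \<Longrightarrow> g v \<in> W"
    using cont_atE[OF assms(1)] by blast
  obtain r where "r > 0" "\<forall>u. coords_close av r u0 u \<longrightarrow> coords_close av e (d u0) (d u)"
    using assms(2)[OF e(1)] by blast
  then show "\<exists>r>0. \<forall>u. coords_close av r u0 u \<longrightarrow> g (d u) \<in> W"
    using e(2) by blast
qed

lemma scalar_cont_at_nth: "i < length u0 \<Longrightarrow> scalar_cont_at av (\<lambda>u. u ! i) u0"
  unfolding scalar_cont_at_def coords_close_iff by blast

context ultrametric_absval
begin

lemma coords_close_refl: "0 < r \<Longrightarrow> coords_close av r a a"
  unfolding coords_close_iff by simp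

lemma cont_at_cong:
  assumes "r0 > 0" "\<And>u. coords_close av r0 u0 u \<Longrightarrow> f u = g u" "cont_at av X g u0"
  shows "cont_at av X f u0"
proof (rule cont_atI)
  fix W assume W: "openin X W" "f u0 \<in> W"
  have "f u0 = g u0"
    using assms(2)[OF coords_close_refl[OF assms(1)]] .
  then obtain r where "r > 0" "\<And>u. coords_close av r u0 u \<Longrightarrow> g u \<in> W"
    using cont_atE[OF assms(3) W(1)] W(2) by metis
  then show "\<exists>r>0. \<forall>u. coords_close av r u0 u \<longrightarrow> f u \<in> W"
    using assms(1,2) by (intro exI[of _ "min r r0"]) (auto dest: coords_close_min)
qed

lemma scalar_cont_at_const: "scalar_cont_at av (\<lambda>u. a) u0"
  unfolding scalar_cont_at_def by (auto intro: exI[of _ 1])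

lemma scalar_cont_at_add:
  assumes p: "scalar_cont_at av p u0" and q: "scalar_cont_at av q u0"
  shows "scalar_cont_at av (\<lambda>u. p u + q u) u0"
  unfolding scalar_cont_at_def
proof (intro allI impI)
  fix e :: real assume e: "e > 0"
  obtain r1 r2 where r: "r1 > 0" "r2 > 0"
    and r1: "\<And>u. coords_close av r1 u0 u \<Longrightarrow> av (p u - p u0) < e"
    and r2: "\<And>u. coords_close av r2 u0 u \<Longrightarrow> av (q u - q u0) < e"
    using scalar_cont_atE[OF p e] scalar_cont_atE[OF q e] by metis
  have "av (p u + q u - (p u0 + q u0)) < e" if u: "coords_close av (min r1 r2) u0 u" for u
  proof -
    have "av (p u + q u - (p u0 + q u0)) = av ((p u - p u0) + (q u - q u0))"
      by (simp add: algebra_simps)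
    also have "\<dots> \<le> max (av (p u - p u0)) (av (q u - q u0))"
      by (rule av_add_le_max)
    also have "\<dots> < e"
      using r1 r2 u by (auto dest: coords_close_min)
    finally show ?thesis .
  qed
  then show "\<exists>r>0. \<forall>u. coords_close av r u0 u \<longrightarrow> av (p u + q u - (p u0 + q u0)) < e"
    using r by (intro exI[of _ "min r1 r2"]) auto
qed

lemma scalar_cont_at_mult:
  assumes p: "scalar_cont_at av p u0" and q: "scalar_cont_at av q u0"
  shows "scalar_cont_at av (\<lambda>u. p u * q u) u0"
  unfolding scalar_cont_at_def
proof (intro allI impI)
  fix e :: real assume e: "e > 0"
  define C where "C = av (p u0) + av (q u0) + 1"
  have C: "av (p u0) < C" "av (q u0) < C" "1 \<le> C"
    using av_nonneg[of "p u0"] av_nonneg[of "q u0"] by (auto simp: C_def)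
  define d where "d = min 1 (e / C)"
  have d: "d > 0" "d * C \<le> e"
    using e C by (auto simp: d_def min_def field_simps)
  obtain r1 r2 where r: "r1 > 0" "r2 > 0"
    and r1: "\<And>u. coords_close av r1 u0 u \<Longrightarrow> av (p u - p u0) < d"
    and r2: "\<And>u. coords_close av r2 u0 u \<Longrightarrow> av (q u - q u0) < d"
    using scalar_cont_atE[OF p d(1)] scalar_cont_atE[OF q d(1)] by metis
  have "av (p u * q u - p u0 * q u0) < e" if u: "coords_close av (min r1 r2) u0 u" for u
  proof -
    have dp: "av (p u - p u0) < d" and dq: "av (q u - q u0) < d"
      using r1 r2 u by (auto dest: coords_close_min)
    have "av (q u) < C"
      using av_less_if_close[OF _ C(2), of "q u"] dq d C by (simp add: d_def)
    then have "av (p u - p u0) * av (q u) < d * C"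
      by (rule mult_strict_mono'[OF dp _ av_nonneg av_nonneg])
    then have left: "av ((p u - p u0) * q u) < e"
      using d(2) by (simp add: av_mult)
    have "av (p u0) * av (q u - q u0) < C * d"
      by (rule mult_strict_mono'[OF C(1) dq av_nonneg av_nonneg])
    then have right: "av (p u0 * (q u - q u0)) < e"
      using d(2) by (simp add: av_mult mult.commute)
    have "p u * q u - p u0 * q u0 = (p u - p u0) * q u + p u0 * (q u - q u0)"
      by (simp add: algebra_simps)
    then show ?thesis
      using av_add_le_max[of "(p u - p u0) * q u" "p u0 * (q u - q u0)"] left right by simp
  qed
  then show "\<exists>r>0. \<forall>u. coords_close av r u0 u \<longrightarrow> av (p u * q u - p u0 * q u0) < e"
    using r by (intro exI[of _ "min r1 r2"]) auto
qed

lemma scalar_cont_at_diff: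
  "scalar_cont_at av p u0 \<Longrightarrow> scalar_cont_at av q u0 \<Longrightarrow> scalar_cont_at av (\<lambda>u. p u - q u) u0"
  using scalar_cont_at_add[of p u0 "\<lambda>u. (-1) * q u"]
    scalar_cont_at_mult[OF scalar_cont_at_const[of "-1" u0], of q]
  by simp

lemma scalar_cont_at_inverse:
  assumes p: "scalar_cont_at av p u0" and nz: "p u0 \<noteq> 0"
  shows "scalar_cont_at av (\<lambda>u. inverse (p u)) u0"
  unfolding scalar_cont_at_def
proof (intro allI impI)
  fix e :: real assume e: "e > 0"
  define a where "a = av (p u0)"
  have a: "a > 0"
    using av_pos[OF nz] by (simp add: a_def)
  obtain r where r: "r > 0" "\<And>u. coords_close av r u0 u \<Longrightarrow> av (p u - p u0) < min a (e * a * a)"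
    using scalar_cont_atE[OF p] a e by (metis min_less_iff_conj mult_pos_pos)
  have "av (inverse (p u) - inverse (p u0)) < e" if "coords_close av r u0 u" for u
  proof -
    have d: "av (p u - p u0) < a" "av (p u - p u0) < e * a * a"
      using r(2)[OF that] by auto
    then have pa: "av (p u) = a"
      using av_eq_if_close[of "p u" "p u0"] by (simp add: a_def)
    moreover have "p u \<noteq> 0"
      using pa a by auto
    ultimately have "inverse (p u) - inverse (p u0) = (p u0 - p u) / (p u * p u0)"
      using nz by (simp add: field_simps)
    then have "av (inverse (p u) - inverse (p u0)) = av (p u - p u0) / (a * a)"
      using pa by (simp add: av_divide av_mult a_def av_minus_commute)
    also have "\<dots> < e"
      using a d(2) by (subst pos_divide_less_eq) (auto simp: mult.assoc)
    finally show ?thesis .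
  qed
  then show "\<exists>r>0. \<forall>u. coords_close av r u0 u \<longrightarrow> av (inverse (p u) - inverse (p u0)) < e"
    using r(1) by blast
qed

lemma coords_close_map:
  assumes "\<forall>q\<in>set qs. scalar_cont_at av q u0" "e > 0"
  shows "\<exists>r>0. \<forall>u. coords_close av r u0 u \<longrightarrow> coords_close av e (map (\<lambda>q. q u0) qs) (map (\<lambda>q. q u) qs)"
  using assms(1)
proof (induction qs)
  case Nil
  then show ?case
    by (auto simp: coords_close_def intro: exI[of _ 1])
next
  case (Cons q qs)
  then have "scalar_cont_at av q u0"
    by simp
  then obtain r1 where r1: "r1 > 0" "\<And>u. coords_close av r1 u0 u \<Longrightarrow> av (q u - q u0) < e"
    using assms(2) by (rule scalar_cont_atE) blast
  obtain r2 where r2: "r2 > 0"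
    "\<And>u. coords_close av r2 u0 u \<Longrightarrow> coords_close av e (map (\<lambda>q. q u0) qs) (map (\<lambda>q. q u) qs)"
    using Cons by auto
  have "coords_close av e (map (\<lambda>q. q u0) (q # qs)) (map (\<lambda>q. q u) (q # qs))"
    if "coords_close av (min r1 r2) u0 u" for u
    using r1(2) r2(2) coords_close_min[OF that] by (simp add: coords_close_def)
  then show ?case
    using r1(1) r2(1) by (intro exI[of _ "min r1 r2"]) auto
qed

end

section \<open>Divided differences of radial maps\<close>

text \<open>The inductive step for divided differences, with \<open>T = h[M]\<close>, \<open>F\<^sub>e = h[M - e]\<close> and
  \<open>G\<^sub>e\<^sub>e\<^sub>' = h[M - e - e']\<close> for the top point \<open>a\<close>, the low point \<open>b\<close> and any other point \<open>e\<close> of \<open>M\<close>.\<close>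

lemma (in vector_space) three_point_scale_identity:
  assumes "a \<noteq> b"
    and ab: "scale (a - b) T = Fb - Fa"
    and e: "scale (a - b) Fe = Gbe - Gae"
    and a: "scale (e - b) Fa = Gab - Gae"
    and b: "scale (e - a) Fb = Gab - Gbe"
  shows "Fe + scale e T = Fa + scale a T"
proof -
  have commute: "scale (a - b) (scale c T) = scale c (Fb - Fa)" for c
    using ab scale_left_commute by metis
  have "scale (a - b) (Fe + scale e T) = scale (a - b) Fe + scale e (Fb - Fa)"
    by (simp only: scale_right_distrib commute)
  also have "\<dots> = scale (a - b) Fa + scale a (Fb - Fa)"
  proof -
    have "scale (a - b) Fe + scale e (Fb - Fa) - (scale (a - b) Fa + scale a (Fb - Fa))
        = scale (a - b) Fe - scale (e - b) Fa + scale (e - a) Fb"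
      by (simp add: scale_left_diff_distrib scale_right_diff_distrib algebra_simps)
    also have "\<dots> = 0"
      unfolding e a b by (simp add: algebra_simps)
    finally show ?thesis
      by simp
  qed
  also have "\<dots> = scale (a - b) (Fa + scale a T)"
    by (simp only: scale_right_distrib commute)
  finally show ?thesis
    using \<open>a \<noteq> b\<close> by simp
qed

lemma (in vector_space) scale_sum_list: "scale k (sum_list xs) = sum_list (map (scale k) xs)"
  by (induction xs) (simp_all add: scale_right_distrib)

definition mixed_abs :: "('k::field \<Rightarrow> real) \<Rightarrow> 'k multiset \<Rightarrow> bool" where
  "mixed_abs av M \<longleftrightarrow> (\<exists>a\<in>#M. \<exists>b\<in>#M. av a \<noteq> av b)"

definition top_point :: "('k::field \<Rightarrow> real) \<Rightarrow> 'k multiset \<Rightarrow> 'k" where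
  "top_point av M = (SOME a. a \<in># M \<and> (\<forall>c\<in>#M. av c \<le> av a))"

definition low_point :: "('k::field \<Rightarrow> real) \<Rightarrow> 'k multiset \<Rightarrow> 'k" where
  "low_point av M = (SOME b. b \<in># M \<and> av b < av (top_point av M))"

text \<open>\<open>divdiff av sc h n {#t\<^sub>0, \<dots>, t\<^sub>n#}\<close> is the divided difference
  \<open>h[t\<^sub>0, \<dots>, t\<^sub>n]\<close> of a radial map \<open>h\<close>; the value \<open>0\<close> on points of equal absolute value is
  forced, as \<open>h\<close> is constant on them.\<close>

primrec divdiff ::
  "('k::field \<Rightarrow> real) \<Rightarrow> ('k \<Rightarrow> 'e::ab_group_add \<Rightarrow> 'e) \<Rightarrow> ('k \<Rightarrow> 'e) \<Rightarrow> nat \<Rightarrow> 'k multiset \<Rightarrow> 'e"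
where
  "divdiff av sc h 0 M = h (SOME a. a \<in># M)"
| "divdiff av sc h (Suc n) M =
     (if mixed_abs av M then
        sc (inverse (top_point av M - low_point av M))
          (divdiff av sc h n (M - {#low_point av M#}) - divdiff av sc h n (M - {#top_point av M#}))
      else 0)"

lemma top_low_point:
  fixes av :: "'k::field \<Rightarrow> real"
  assumes "mixed_abs av M"
  shows "top_point av M \<in># M" "\<forall>c\<in>#M. av c \<le> av (top_point av M)"
    and "low_point av M \<in># M" "av (low_point av M) < av (top_point av M)"
proof -
  obtain a1 b1 where ab1: "a1 \<in># M" "b1 \<in># M" "av a1 \<noteq> av b1"
    using assms unfolding mixed_abs_def by blast
  have "Max (av ` set_mset M) \<in> av ` set_mset M"
    using ab1 by (intro Max_in) auto
  then obtain a where "a \<in># M" "av a = Max (av ` set_mset M)"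
    by auto
  then have "\<exists>a. a \<in># M \<and> (\<forall>c\<in>#M. av c \<le> av a)"
    by auto
  then have top: "top_point av M \<in># M \<and> (\<forall>c\<in>#M. av c \<le> av (top_point av M))"
    unfolding top_point_def by (rule someI_ex)
  then show "top_point av M \<in># M" "\<forall>c\<in>#M. av c \<le> av (top_point av M)"
    by auto
  have "av a1 \<le> av (top_point av M)" "av b1 \<le> av (top_point av M)"
    using top ab1 by auto
  then have "\<exists>b. b \<in># M \<and> av b < av (top_point av M)"
    using ab1 by (cases "av a1 = av (top_point av M)") (auto intro: exI[of _ a1] exI[of _ b1])
  then have "low_point av M \<in># M \<and> av (low_point av M) < av (top_point av M)"
    unfolding low_point_def by (rule someI_ex)
  then show "low_point av M \<in># M" "av (low_point av M) < av (top_point av M)"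
    by auto
qed

lemma mixed_abs_diff: "mixed_abs av (M - N) \<Longrightarrow> mixed_abs av M"
  unfolding mixed_abs_def by (meson in_diffD)

lemma size_2_multiset_cases:
  assumes "size M = 2" "x \<in># M" "y \<in># M" "x \<noteq> y" "a \<in># M" "b \<in># M"
  obtains "a = b" | "a = x" "b = y" | "a = y" "b = x"
proof -
  have "y \<in># M - {#x#}"
    using assms(3,4) by (simp add: in_diff_count)
  then obtain X where X: "M - {#x#} = add_mset y X"
    by (metis multi_member_split)
  moreover have "size (M - {#x#}) = 1"
    using assms(1,2) by (simp add: size_Diff_singleton)
  ultimately have "M = {#x, y#}"
    using assms(2) by (metis add_mset_eq_single insert_DiffM size_1_singleton_mset)
  then show thesis
    using assms(5,6) that by auto
qed

lemma mixed_abs_mset_iff: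
  "mixed_abs av (mset u) \<longleftrightarrow> (\<exists>i<length u. \<exists>l<length u. av (u ! l) < av (u ! i))"
proof
  assume "mixed_abs av (mset u)"
  then obtain x y where "x \<in> set u" "y \<in> set u" "av x \<noteq> av y"
    unfolding mixed_abs_def by auto
  then obtain i l where il: "i < length u" "l < length u" "av (u ! i) \<noteq> av (u ! l)"
    using in_set_conv_nth[of x u] in_set_conv_nth[of y u] by auto
  show "\<exists>i<length u. \<exists>l<length u. av (u ! l) < av (u ! i)"
  proof (cases "av (u ! l) < av (u ! i)")
    case True
    then show ?thesis
      using il by blast
  next
    case False
    then have "av (u ! i) < av (u ! l)"
      using il(3) by linarith
    then show ?thesis
      using il by blast
  qed
next
  assume "\<exists>i<length u. \<exists>l<length u. av (u ! l) < av (u ! i)"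
  then obtain i l where "i < length u" "l < length u" "av (u ! i) \<noteq> av (u ! l)"
    by force
  then show "mixed_abs av (mset u)"
    unfolding mixed_abs_def set_mset_mset by (intro bexI[of _ "u ! i"] bexI[of _ "u ! l"]) auto
qed

locale radial_map = ultrametric_absval av + vector_space sc
  for av :: "'k::field \<Rightarrow> real" and sc :: "'k \<Rightarrow> 'e::ab_group_add \<Rightarrow> 'e" +
  fixes h :: "'k \<Rightarrow> 'e"
  assumes radial: "av a = av b \<Longrightarrow> h a = h b"
begin

abbreviation dd :: "nat \<Rightarrow> 'k multiset \<Rightarrow> 'e" where
  "dd \<equiv> divdiff av sc h"

lemma dd_Suc_top_low:
  assumes "mixed_abs av M"
  shows "sc (top_point av M - low_point av M) (dd (Suc n) M)
       = dd n (M - {#low_point av M#}) - dd n (M - {#top_point av M#})"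
proof -
  have "top_point av M \<noteq> low_point av M"
    using top_low_point(4)[OF assms] by auto
  then show ?thesis
    using assms by simp
qed

lemma dd_pair_size_2:
  assumes "size M = 2" "a \<in># M" "b \<in># M"
  shows "sc (a - b) (dd 1 M) = dd 0 (M - {#b#}) - dd 0 (M - {#a#})"
proof (cases "mixed_abs av M")
  case False
  have "size (M - {#b#}) = 1" "size (M - {#a#}) = 1"
    using assms by (simp_all add: size_Diff_singleton)
  then have "M - {#b#} \<noteq> {#}" "M - {#a#} \<noteq> {#}"
    by auto
  then have "(SOME x. x \<in># M - {#b#}) \<in># M" "(SOME x. x \<in># M - {#a#}) \<in># M"
    by (meson in_diffD multiset_nonemptyE someI_ex)+
  then have "av (SOME x. x \<in># M - {#b#}) = av (SOME x. x \<in># M - {#a#})"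
    using False unfolding mixed_abs_def by blast
  then have "dd 0 (M - {#b#}) = dd 0 (M - {#a#})"
    unfolding divdiff.simps by (rule radial)
  then show ?thesis
    using False by simp
next
  case True
  let ?a = "top_point av M" and ?b = "low_point av M"
  have "?a \<in># M" "?b \<in># M" "?a \<noteq> ?b"
    using top_low_point[OF True] by auto
  then consider "a = b" | "a = ?a" "b = ?b" | "a = ?b" "b = ?a"
    using size_2_multiset_cases assms by metis
  then show ?thesis
  proof cases
    case 2
    then show ?thesis
      using dd_Suc_top_low[OF True, of 0] by simp
  next
    case 3
    have "sc (?b - ?a) (dd 1 M) = - sc (?a - ?b) (dd 1 M)"
      by (simp add: scale_left_diff_distrib)
    then show ?thesis
      using 3 dd_Suc_top_low[OF True, of 0] by simp
  qed simp
qed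

lemma dd_remove_point_affine:
  assumes IH: "\<And>N a b. size N = n + 2 \<Longrightarrow> a \<in># N \<Longrightarrow> b \<in># N \<Longrightarrow>
      sc (a - b) (dd (Suc n) N) = dd n (N - {#b#}) - dd n (N - {#a#})"
    and M: "size M = n + 3" "mixed_abs av M" and e: "e \<in># M"
  shows "dd (Suc n) (M - {#e#}) + sc e (dd (Suc (Suc n)) M)
    = dd (Suc n) (M - {#top_point av M#}) + sc (top_point av M) (dd (Suc (Suc n)) M)"
proof -
  let ?a = "top_point av M" and ?b = "low_point av M"
  have top_low: "?a \<in># M" "?b \<in># M" "?a \<noteq> ?b"
    using top_low_point[OF M(2)] by auto
  define T where "T = dd (Suc (Suc n)) M"
  define F where "F e = dd (Suc n) (M - {#e#})" for e
  define G where "G e e' = dd n (M - {#e#} - {#e'#})" for e e'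
  have pair: "sc (x - y) (F z) = G z y - G z x"
    if "x \<in># M - {#z#}" "y \<in># M - {#z#}" "z \<in># M" for x y z
    unfolding F_def G_def by (rule IH) (use that M(1) in \<open>auto simp: size_Diff_singleton\<close>)
  have top: "sc (?a - ?b) T = F ?b - F ?a"
    unfolding T_def F_def by (rule dd_Suc_top_low[OF M(2)])
  have "F e + sc e T = F ?a + sc ?a T"
  proof (cases "e = ?a \<or> e = ?b")
    case True
    then show ?thesis
      using top by (auto simp: scale_left_diff_distrib algebra_simps)
  next
    case False
    have G_commute: "G x y = G y x" for x y
      unfolding G_def by (metis diff_right_commute)
    have mem: "x \<in># M - {#y#}" if "x \<in># M" "x \<noteq> y" for x y
      using that by (simp add: in_diff_count)
    have ne: "e \<noteq> ?a" "e \<noteq> ?b" "?b \<noteq> ?a"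
      using False top_low(3) by auto
    have "sc (?a - ?b) (F e) = G e ?b - G e ?a"
      using pair[OF mem mem e] top_low ne by simp
    moreover have "sc (e - ?b) (F ?a) = G ?a ?b - G e ?a"
      using pair[OF mem mem top_low(1)] e top_low ne G_commute[of ?a e] by simp
    moreover have "sc (e - ?a) (F ?b) = G ?a ?b - G e ?b"
      using pair[OF mem mem top_low(2)] e top_low ne G_commute[of ?b e] G_commute[of ?b ?a] by simp
    ultimately show ?thesis
      by (rule three_point_scale_identity[OF top_low(3) top])
  qed
  then show ?thesis
    unfolding T_def F_def .
qed

lemma dd_pair_step:
  assumes IH: "\<And>N a b. size N = n + 2 \<Longrightarrow> a \<in># N \<Longrightarrow> b \<in># N \<Longrightarrow>
      sc (a - b) (dd (Suc n) N) = dd n (N - {#b#}) - dd n (N - {#a#})"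
    and M: "size M = n + 3" "a \<in># M" "b \<in># M"
  shows "sc (a - b) (dd (Suc (Suc n)) M) = dd (Suc n) (M - {#b#}) - dd (Suc n) (M - {#a#})"
proof (cases "mixed_abs av M")
  case False
  then have "\<not> mixed_abs av (M - {#b#})" "\<not> mixed_abs av (M - {#a#})"
    using mixed_abs_diff by blast+
  then show ?thesis
    using False by simp
next
  case True
  let ?T = "dd (Suc (Suc n)) M" and ?a = "top_point av M"
  have "sc (a - b) ?T = (dd (Suc n) (M - {#?a#}) + sc ?a ?T - dd (Suc n) (M - {#a#}))
      - (dd (Suc n) (M - {#?a#}) + sc ?a ?T - dd (Suc n) (M - {#b#}))"
    using dd_remove_point_affine[OF IH M(1) True M(2)] dd_remove_point_affine[OF IH M(1) True M(3)]
    by (simp add: scale_left_diff_distrib algebra_simps)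
  then show ?thesis
    by simp
qed

lemma dd_pair:
  "size M = n + 2 \<Longrightarrow> a \<in># M \<Longrightarrow> b \<in># M \<Longrightarrow>
   sc (a - b) (dd (Suc n) M) = dd n (M - {#b#}) - dd n (M - {#a#})"
proof (induction n arbitrary: M a b)
  case 0
  then show ?case
    using dd_pair_size_2 by simp
next
  case (Suc n)
  then show ?case
    using dd_pair_step[of n M a b] by simp
qed

definition dd_list :: "'k list \<Rightarrow> 'e" where
  "dd_list u = dd (length u - 1) (mset u)"

lemma dd_list_single [simp]: "dd_list [a] = h a"
  unfolding dd_list_def by simp

lemma dd_list_swap:
  "dd_list (P @ [y] @ Q) - dd_list (P @ [x] @ Q) = sc (y - x) (dd_list (P @ [x, y] @ Q))"
proof -
  define M where "M = mset (P @ [x, y] @ Q)"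
  have "size M = length P + length Q + 2"
    unfolding M_def by simp
  then have "sc (y - x) (dd (Suc (length P + length Q)) M)
      = dd (length P + length Q) (M - {#x#}) - dd (length P + length Q) (M - {#y#})"
    by (rule dd_pair) (auto simp: M_def)
  moreover have "M - {#x#} = mset (P @ [y] @ Q)" "M - {#y#} = mset (P @ [x] @ Q)"
    unfolding M_def by simp_all
  ultimately show ?thesis
    unfolding dd_list_def M_def by simp
qed

lemma dd_list_telescope:
  "length A = length B \<Longrightarrow> dd_list (P @ A) - dd_list (P @ B)
     = (\<Sum>i<length A. sc (A ! i - B ! i) (dd_list (P @ take i A @ [B ! i, A ! i] @ drop (Suc i) B)))"
proof (induction A arbitrary: B P)
  case Nil
  then show ?case
    by simp
next
  case (Cons a A)
  then obtain b B' where B: "B = b # B'" "length B' = length A"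
    by (cases B) auto
  have IH: "dd_list (P @ a # A) - dd_list (P @ a # B') = (\<Sum>i<length A.
      sc (A ! i - B' ! i) (dd_list (P @ a # take i A @ [B' ! i, A ! i] @ drop (Suc i) B')))"
    using Cons.IH[OF B(2)[symmetric], of "P @ [a]"] by simp
  have swap: "dd_list (P @ a # B') - dd_list (P @ b # B') = sc (a - b) (dd_list (P @ b # a # B'))"
    using dd_list_swap[of P a B' b] by simp
  have "dd_list (P @ a # A) - dd_list (P @ B)
      = (dd_list (P @ a # A) - dd_list (P @ a # B')) + (dd_list (P @ a # B') - dd_list (P @ b # B'))"
    using B by simp
  then show ?case
    unfolding IH swap using B(1) by (simp add: sum.lessThan_Suc_shift add.commute del: sum.lessThan_Suc)
qed

lemma dd_list_remove_pair:
  assumes "i < length u" "l < length u" "length u = n + 2"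
  shows "sc (u ! i - u ! l) (dd_list u) = dd_list (remove_nth l u) - dd_list (remove_nth i u)"
proof -
  have "sc (u ! i - u ! l) (dd (Suc n) (mset u))
      = dd n (mset u - {#u ! l#}) - dd n (mset u - {#u ! i#})"
    by (rule dd_pair) (use assms in auto)
  then show ?thesis
    unfolding dd_list_def using assms by (simp add: mset_remove_nth length_remove_nth)
qed

lemma dd_list_eq_if_same_abs:
  assumes "\<not> mixed_abs av (mset u0)" "u0 \<noteq> []"
    and "length u = length u0" "\<And>k. k < length u0 \<Longrightarrow> av (u ! k) = av (u0 ! k)"
  shows "dd_list u = dd_list u0"
proof -
  obtain m where m: "length u0 = Suc m"
    using assms(2) by (cases u0) auto
  have not_mixed: "\<not> mixed_abs av (mset u)"
    using assms(1,3,4) unfolding mixed_abs_def by (metis in_set_conv_nth set_mset_mset)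
  show ?thesis
  proof (cases m)
    case 0
    then obtain x y where "u = [x]" "u0 = [y]"
      using m assms(3) by (metis length_0_conv length_Suc_conv)
    moreover have "av x = av y"
      using assms(4)[of 0] \<open>u = [x]\<close> \<open>u0 = [y]\<close> by simp
    ultimately show ?thesis
      using radial[of x y] by simp
  next
    case (Suc m')
    then show ?thesis
      using not_mixed assms(1,3) m by (simp add: dd_list_def)
  qed
qed

lemma scale_short_sum:
  assumes L: "\<forall>(c, w)\<in>set L. w \<in># M \<and> av c * av w ^ n \<le> 1"
    and a: "\<forall>w\<in>#M. av w \<le> av a" "a \<noteq> 0" and k: "av k = inverse (av a)"
  shows "\<forall>(c, w)\<in>set (map (\<lambda>(c, w). (k * c, w)) L). w \<in># M \<and> av c * av w ^ Suc n \<le> 1"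
    and "sc k (\<Sum>(c, w)\<leftarrow>L. sc c (h w)) = (\<Sum>(c, w)\<leftarrow>map (\<lambda>(c, w). (k * c, w)) L. sc c (h w))"
proof -
  have "av (k * c) * av w ^ Suc n \<le> 1" if "(c, w) \<in> set L" for c w
  proof -
    have w: "w \<in># M" "av c * av w ^ n \<le> 1"
      using L that by auto
    have "av (k * c) * av w ^ Suc n = (av c * av w ^ n) * (av w / av a)"
      using k by (simp add: av_mult field_simps)
    also have "\<dots> \<le> 1 * 1"
      using w a av_pos[of a] av_nonneg[of w] av_nonneg[of c]
      by (intro mult_mono) (auto simp: field_simps)
    finally show ?thesis
      by simp
  qed
  then show "\<forall>(c, w)\<in>set (map (\<lambda>(c, w). (k * c, w)) L). w \<in># M \<and> av c * av w ^ Suc n \<le> 1"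
    using L by auto
  show "sc k (\<Sum>(c, w)\<leftarrow>L. sc c (h w)) = (\<Sum>(c, w)\<leftarrow>map (\<lambda>(c, w). (k * c, w)) L. sc c (h w))"
    unfolding scale_sum_list by (simp add: comp_def case_prod_beta)
qed

text \<open>A divided difference of order \<open>n\<close> is a sum of at most \<open>2\<^sup>n\<close> terms \<open>c h(w)\<close> with
  \<open>|c| |w|\<^sup>n \<le> 1\<close>, since each division is by some \<open>a - b\<close> with \<open>|a - b| = |a|\<close> maximal.\<close>

lemma dd_short_sum:
  "size M = n + 1 \<Longrightarrow> \<exists>L. length L \<le> 2 ^ n \<and> (\<forall>(c, w)\<in>set L. w \<in># M \<and> av c * av w ^ n \<le> 1)
     \<and> dd n M = (\<Sum>(c, w)\<leftarrow>L. sc c (h w))"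
proof (induction n arbitrary: M)
  case 0
  then have "(SOME a. a \<in># M) \<in># M"
    by (metis size_eq_0_iff_empty someI_ex multiset_nonemptyE Suc_eq_plus1 nat.distinct(1))
  then show ?case
    by (intro exI[of _ "[(1, SOME a. a \<in># M)]"]) simp
next
  case (Suc n M)
  show ?case
  proof (cases "mixed_abs av M")
    case False
    then show ?thesis
      by (intro exI[of _ "[]"]) simp
  next
    case True
    let ?a = "top_point av M" and ?b = "low_point av M"
    define k where "k = inverse (?a - ?b)"
    have top_low: "?a \<in># M" "?b \<in># M" "av ?b < av ?a"
      using top_low_point[OF True] by auto
    have top: "\<forall>w\<in>#M - {#e#}. av w \<le> av ?a" "?a \<noteq> 0" for e
      using top_low_point[OF True] av_nonneg[of ?b] by (auto dest: in_diffD)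
    have k: "av k = inverse (av ?a)" "av (- k) = inverse (av ?a)"
      using av_diff_dominant[OF top_low(3)] by (simp_all add: k_def av_inverse)
    obtain La Lb where
      La: "length La \<le> 2 ^ n" "\<forall>(c, w)\<in>set La. w \<in># M - {#?a#} \<and> av c * av w ^ n \<le> 1"
        "dd n (M - {#?a#}) = (\<Sum>(c, w)\<leftarrow>La. sc c (h w))" and
      Lb: "length Lb \<le> 2 ^ n" "\<forall>(c, w)\<in>set Lb. w \<in># M - {#?b#} \<and> av c * av w ^ n \<le> 1"
        "dd n (M - {#?b#}) = (\<Sum>(c, w)\<leftarrow>Lb. sc c (h w))"
      using Suc.IH[of "M - {#?a#}"] Suc.IH[of "M - {#?b#}"] Suc.prems top_low
      by (auto simp: size_Diff_singleton)
    have "dd (Suc n) M = sc k (dd n (M - {#?b#})) + sc (- k) (dd n (M - {#?a#}))"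
      using True by (simp add: k_def scale_right_diff_distrib)
    then show ?thesis
      using scale_short_sum[OF Lb(2) top k(1)] scale_short_sum[OF La(2) top k(2)] La Lb
      by (intro exI[of _ "map (\<lambda>(c, w). (k * c, w)) Lb @ map (\<lambda>(c, w). (- k * c, w)) La"])
        (auto dest: in_diffD)
  qed
qed

end

section \<open>Continuity of divided differences of flat radial maps\<close>

lemma continuous_map_pair_nbhds:
  assumes "continuous_map (prod_topology X Y) Z f" "openin Z W" "f (a, b) \<in> W"
    and "a \<in> topspace X" "b \<in> topspace Y"
  obtains U V where "openin X U" "openin Y V" "a \<in> U" "b \<in> V" "\<And>x y. x \<in> U \<Longrightarrow> y \<in> V \<Longrightarrow> f (x, y) \<in> W"
proof -
  have "openin (prod_topology X Y) {z \<in> topspace (prod_topology X Y). f z \<in> W}"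
    using assms(1,2) by (rule openin_continuous_map_preimage)
  moreover have "(a, b) \<in> {z \<in> topspace (prod_topology X Y). f z \<in> W}"
    using assms(3-5) by simp
  ultimately obtain U V where "openin X U" "openin Y V" "a \<in> U" "b \<in> V"
    "U \<times> V \<subseteq> {z \<in> topspace (prod_topology X Y). f z \<in> W}"
    unfolding openin_prod_topology_alt by meson
  then show thesis
    using that by blast
qed

locale valued_tvs = ultrametric_absval av + vector_space sc
  for av :: "'k::field \<Rightarrow> real" and sc :: "'k \<Rightarrow> 'e::ab_group_add \<Rightarrow> 'e" +
  fixes TE :: "'e topology"
  assumes topspace_TE: "topspace TE = UNIV"
    and continuous_add: "continuous_map (prod_topology TE TE) TE (\<lambda>(x, y). x + y)"
    and continuous_scale: "continuous_map (prod_topology (abs_topology av) TE) TE (\<lambda>(t, v). sc t v)"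
begin

lemma cont_at_add:
  assumes f: "cont_at av TE f u0" and g: "cont_at av TE g u0"
  shows "cont_at av TE (\<lambda>u. f u + g u) u0"
proof (rule cont_atI)
  fix W assume W: "openin TE W" "f u0 + g u0 \<in> W"
  obtain U V where UV: "openin TE U" "openin TE V" "f u0 \<in> U" "g u0 \<in> V"
    and add: "\<And>x y. x \<in> U \<Longrightarrow> y \<in> V \<Longrightarrow> x + y \<in> W"
    using continuous_map_pair_nbhds[OF continuous_add W(1), of "f u0" "g u0"] W(2) topspace_TE
    by auto
  obtain r1 r2 where "r1 > 0" "\<And>u. coords_close av r1 u0 u \<Longrightarrow> f u \<in> U"
    and "r2 > 0" "\<And>u. coords_close av r2 u0 u \<Longrightarrow> g u \<in> V"
    using cont_atE[OF f UV(1,3)] cont_atE[OF g UV(2,4)] by metis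
  then show "\<exists>r>0. \<forall>u. coords_close av r u0 u \<longrightarrow> f u + g u \<in> W"
    using add by (intro exI[of _ "min r1 r2"]) (auto dest: coords_close_min)
qed

lemma cont_at_scale:
  assumes p: "scalar_cont_at av p u0" and f: "cont_at av TE f u0"
  shows "cont_at av TE (\<lambda>u. sc (p u) (f u)) u0"
proof (rule cont_atI)
  fix W assume W: "openin TE W" "sc (p u0) (f u0) \<in> W"
  obtain A V where AV: "openin (abs_topology av) A" "openin TE V" "p u0 \<in> A" "f u0 \<in> V"
    and scale: "\<And>t v. t \<in> A \<Longrightarrow> v \<in> V \<Longrightarrow> sc t v \<in> W"
    using continuous_map_pair_nbhds[OF continuous_scale W(1), of "p u0" "f u0"] W(2) topspace_TE
    by auto
  obtain d where d: "d > 0" "\<And>y. av (y - p u0) < d \<Longrightarrow> y \<in> A"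
    using AV(1,3) unfolding openin_abs_topology by blast
  obtain r1 r2 where "r1 > 0" "\<And>u. coords_close av r1 u0 u \<Longrightarrow> av (p u - p u0) < d"
    and "r2 > 0" "\<And>u. coords_close av r2 u0 u \<Longrightarrow> f u \<in> V"
    using scalar_cont_atE[OF p d(1)] cont_atE[OF f AV(2,4)] by metis
  then show "\<exists>r>0. \<forall>u. coords_close av r u0 u \<longrightarrow> sc (p u) (f u) \<in> W"
    using scale d(2) by (intro exI[of _ "min r1 r2"]) (auto dest: coords_close_min)
qed

lemma cont_at_diff:
  assumes "cont_at av TE f u0" "cont_at av TE g u0"
  shows "cont_at av TE (\<lambda>u. f u - g u) u0"
  using cont_at_add[OF assms(1) cont_at_scale[OF scalar_cont_at_const assms(2)], of "-1"] by simp

lemma nbhd_sum_list: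
  assumes "openin TE W" "0 \<in> W"
  obtains V where "openin TE V" "0 \<in> V" "\<And>L. length L \<le> N \<Longrightarrow> set L \<subseteq> V \<Longrightarrow> sum_list L \<in> W"
  using assms
proof (induction N arbitrary: W thesis)
  case 0
  then show ?case
    by auto
next
  case (Suc N W)
  obtain V1 V2 where V: "openin TE V1" "openin TE V2" "0 \<in> V1" "0 \<in> V2"
    and add: "\<And>x y. x \<in> V1 \<Longrightarrow> y \<in> V2 \<Longrightarrow> x + y \<in> W"
    using continuous_map_pair_nbhds[OF continuous_add Suc.prems(2), of 0 0] Suc.prems(3) topspace_TE
    by auto
  obtain V' where V': "openin TE V'" "0 \<in> V'"
    and sum: "\<And>L. length L \<le> N \<Longrightarrow> set L \<subseteq> V' \<Longrightarrow> sum_list L \<in> V2"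
    using Suc.IH[OF _ V(2,4)] by blast
  have "sum_list L \<in> W" if "length L \<le> Suc N" "set L \<subseteq> V1 \<inter> V'" for L
  proof (cases L)
    case Nil
    then show ?thesis
      using Suc.prems(3) by simp
  next
    case (Cons x L')
    then show ?thesis
      using that add sum by auto
  qed
  then show ?case
    using Suc.prems(1)[of "V1 \<inter> V'"] V V' by auto
qed

end

text \<open>\<open>flat\<close> says \<open>h(w) = o(|w|\<^sup>j)\<close> for every \<open>j\<close>, phrased without a norm on \<open>E\<close>: near \<open>0\<close>,
  \<open>h(w)\<close> lies in a given neighbourhood of \<open>0\<close> even after scaling by any \<open>c\<close> with \<open>|c| \<le> |w|\<^sup>-\<^sup>j\<close>.\<close>

locale flat_radial_map = radial_map av sc h + valued_tvs av sc TE
  for av :: "'k::field \<Rightarrow> real" and sc :: "'k \<Rightarrow> 'e::ab_group_add \<Rightarrow> 'e" and h TE +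
  assumes h_0: "h 0 = 0"
    and flat: "openin TE W \<Longrightarrow> 0 \<in> W \<Longrightarrow>
      \<exists>\<epsilon>>0. \<forall>w c. av w < \<epsilon> \<longrightarrow> av c * av w ^ j \<le> 1 \<longrightarrow> sc c (h w) \<in> W"
begin

lemma cont_at_dd_list_same_abs:
  assumes "\<not> mixed_abs av (mset u0)" "u0 \<noteq> []" "u0 ! 0 \<noteq> 0"
  shows "cont_at av TE dd_list u0"
proof (rule cont_at_cong[OF av_pos[OF assms(3)] _ cont_at_const])
  fix u assume u: "coords_close av (av (u0 ! 0)) u0 u"
  have same: "av (u0 ! k) = av (u0 ! 0)" if "k < length u0" for k
    using assms(1,2) that unfolding mixed_abs_def by (metis in_set_conv_nth length_greater_0_conv set_mset_mset)
  show "dd_list u = dd_list u0"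
  proof (rule dd_list_eq_if_same_abs[OF assms(1,2)])
    show "length u = length u0"
      using u by (simp add: coords_close_iff)
    show "av (u ! k) = av (u0 ! k)" if "k < length u0" for k
      using u that same[OF that] av_eq_if_close[of "u ! k" "u0 ! k"] by (simp add: coords_close_iff)
  qed
qed

lemma dd_list_zeros:
  assumes zero: "\<And>k. k < length u \<Longrightarrow> u ! k = 0" and "u \<noteq> []"
  shows "dd_list u = 0"
proof -
  obtain m where m: "length u = Suc m"
    using assms(2) by (cases u) auto
  show ?thesis
  proof (cases m)
    case 0
    then have "u = [0]"
      using m zero[of 0] by (cases u) auto
    then show ?thesis
      by (simp add: h_0)
  next
    case (Suc m')
    have "\<not> mixed_abs av (mset u)"
      using zero unfolding mixed_abs_mset_iff by auto
    then show ?thesis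
      using m Suc by (simp add: dd_list_def)
  qed
qed

lemma cont_at_dd_list_zero:
  assumes zero: "\<And>k. k < length u0 \<Longrightarrow> u0 ! k = 0" and len: "length u0 = n + 1"
  shows "cont_at av TE dd_list u0"
proof (rule cont_atI)
  fix W assume W: "openin TE W" "dd_list u0 \<in> W"
  have "dd_list u0 = 0"
    using zero len by (intro dd_list_zeros) auto
  then obtain V where V: "openin TE V" "0 \<in> V"
    and sum: "\<And>L. length L \<le> 2 ^ n \<Longrightarrow> set L \<subseteq> V \<Longrightarrow> sum_list L \<in> W"
    using nbhd_sum_list W by metis
  obtain e where e: "e > 0" "\<And>w c. av w < e \<Longrightarrow> av c * av w ^ n \<le> 1 \<Longrightarrow> sc c (h w) \<in> V"
    using flat[OF V] by blast
  have "dd_list u \<in> W" if u: "coords_close av e u0 u" for u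
  proof -
    have len_u: "length u = n + 1"
      using u len by (simp add: coords_close_iff)
    have small: "av w < e" if "w \<in># mset u" for w
      using that u zero by (auto simp: coords_close_iff in_set_conv_nth)
    obtain L where L: "length L \<le> 2 ^ n" "\<forall>(c, w)\<in>set L. w \<in># mset u \<and> av c * av w ^ n \<le> 1"
      and dd_L: "dd n (mset u) = (\<Sum>(c, w)\<leftarrow>L. sc c (h w))"
      using dd_short_sum[of "mset u" n] len_u by auto
    have "set (map (\<lambda>(c, w). sc c (h w)) L) \<subseteq> V"
      using L(2) small e(2) by auto
    then show ?thesis
      using sum[of "map (\<lambda>(c, w). sc c (h w)) L"] L(1) dd_L len_u by (simp add: dd_list_def)
  qed
  then show "\<exists>r>0. \<forall>u. coords_close av r u0 u \<longrightarrow> dd_list u \<in> W"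
    using e(1) by blast
qed

lemma cont_at_dd_list_mixed:
  assumes IH: "\<And>v. length v = n + 1 \<Longrightarrow> cont_at av TE dd_list v"
    and len: "length u0 = n + 2"
    and il: "i < length u0" "l < length u0" "av (u0 ! l) < av (u0 ! i)"
  shows "cont_at av TE dd_list u0"
proof -
  define g where "g u = sc (inverse (u ! i - u ! l)) (dd_list (remove_nth l u) - dd_list (remove_nth i u))" for u
  have "dd_list u = g u" if u: "coords_close av (av (u0 ! i)) u0 u" for u
  proof -
    have "av (u ! i) = av (u0 ! i)"
      by (rule av_eq_if_close) (use u il(1) in \<open>simp add: coords_close_iff\<close>)
    moreover have "av (u ! l) < av (u0 ! i)"
      by (rule av_less_if_close[of _ "u0 ! l"]) (use u il in \<open>simp_all add: coords_close_iff\<close>)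
    ultimately have "u ! i - u ! l \<noteq> 0"
      by auto
    then have "dd_list u = sc (inverse (u ! i - u ! l)) (sc (u ! i - u ! l) (dd_list u))"
      by simp
    also have "sc (u ! i - u ! l) (dd_list u) = dd_list (remove_nth l u) - dd_list (remove_nth i u)"
      using u il len by (intro dd_list_remove_pair[of i u l n]) (auto simp: coords_close_iff)
    finally show ?thesis
      unfolding g_def .
  qed
  moreover have "cont_at av TE g u0"
  proof -
    have remove: "cont_at av TE (\<lambda>u. dd_list (remove_nth j u)) u0" if "j < length u0" for j
      by (rule cont_at_compose[where g=dd_list and d="remove_nth j", OF IH])
        (use that len in \<open>auto simp: length_remove_nth intro: coords_close_remove_nth\<close>)
    have "scalar_cont_at av (\<lambda>u. inverse (u ! i - u ! l)) u0"
      using il by (intro scalar_cont_at_inverse scalar_cont_at_diff scalar_cont_at_nth) auto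
    then show ?thesis
      unfolding g_def using remove il by (intro cont_at_scale cont_at_diff) auto
  qed
  moreover have "av (u0 ! i) > 0"
    using il(3) av_nonneg[of "u0 ! l"] by linarith
  ultimately show ?thesis
    using cont_at_cong[of "av (u0 ! i)" u0 dd_list g] by blast
qed

lemma cont_at_dd_list_not_mixed:
  assumes "\<not> mixed_abs av (mset u0)" "u0 \<noteq> []"
  shows "cont_at av TE dd_list u0"
proof (cases "u0 ! 0 = 0")
  case True
  have "u0 ! k = 0" if "k < length u0" for k
  proof -
    have "\<not> av (u0 ! 0) < av (u0 ! k)"
      using assms that unfolding mixed_abs_mset_iff by blast
    then show ?thesis
      using True av_nonneg[of "u0 ! k"] by simp
  qed
  then show ?thesis
    using cont_at_dd_list_zero[of u0 "length u0 - 1"] assms(2) by simp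
next
  case False
  then show ?thesis
    using cont_at_dd_list_same_abs assms by blast
qed

lemma cont_at_dd_list_length: "length u0 = n + 1 \<Longrightarrow> cont_at av TE dd_list u0"
proof (induction n arbitrary: u0)
  case 0
  then show ?case
    by (intro cont_at_dd_list_not_mixed) (auto simp: length_Suc_conv mixed_abs_def)
next
  case (Suc n)
  show ?case
  proof (cases "mixed_abs av (mset u0)")
    case True
    then show ?thesis
      using cont_at_dd_list_mixed[OF Suc.IH] Suc.prems by (auto simp: mixed_abs_mset_iff)
  next
    case False
    then show ?thesis
      using Suc.prems by (intro cont_at_dd_list_not_mixed) auto
  qed
qed

lemma cont_at_dd_list: "cont_at av TE dd_list u0"
proof (cases u0)
  case Nil
  have "dd_list u = dd_list u0" if "coords_close av 1 u0 u" for u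
    using that Nil by (simp add: coords_close_iff)
  then show ?thesis
    by (rule cont_at_cong[OF zero_less_one _ cont_at_const])
next
  case (Cons a u')
  then show ?thesis
    using cont_at_dd_list_length[of u0 "length u'"] by simp
qed

end

section \<open>Polynomial coefficients and difference quotients\<close>

inductive poly_fun :: "nat \<Rightarrow> ('k::field list \<Rightarrow> 'k) \<Rightarrow> bool" for N where
  poly_const: "poly_fun N (\<lambda>w. a)"
| poly_coord: "i < N \<Longrightarrow> poly_fun N (\<lambda>w. w ! i)"
| poly_add: "poly_fun N p \<Longrightarrow> poly_fun N q \<Longrightarrow> poly_fun N (\<lambda>w. p w + q w)"
| poly_mult: "poly_fun N p \<Longrightarrow> poly_fun N q \<Longrightarrow> poly_fun N (\<lambda>w. p w * q w)"

lemma poly_fun_compose: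
  assumes "poly_fun N p" "\<And>i. i < N \<Longrightarrow> poly_fun M (\<lambda>w. g w ! i)"
  shows "poly_fun M (\<lambda>w. p (g w))"
  using assms(1) by induction (auto intro: poly_fun.intros assms(2))

text \<open>A point \<open>w = x @ v @ [t]\<close> of \<open>V\<^bsup>[1]\<^esup>\<close> for \<open>V \<subseteq> \<bbbK>\<^sup>N\<close> is a list of length \<open>2N + 1\<close>;
  \<open>dq_base N w = x\<close> and \<open>dq_target N w = x + t v\<close>.\<close>

definition dq_base :: "nat \<Rightarrow> 'k list \<Rightarrow> 'k list" where
  "dq_base N w = take N w"

definition dq_target :: "nat \<Rightarrow> 'k::field list \<Rightarrow> 'k list" where
  "dq_target N w = map (\<lambda>i. w ! i + w ! (2 * N) * w ! (N + i)) [0..<N]"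

lemma poly_fun_dq_base: "poly_fun N p \<Longrightarrow> poly_fun (2 * N + 1) (\<lambda>w. p (dq_base N w))"
  by (erule poly_fun_compose) (simp add: dq_base_def poly_coord)

lemma poly_fun_dq_target: "poly_fun N p \<Longrightarrow> poly_fun (2 * N + 1) (\<lambda>w. p (dq_target N w))"
  by (erule poly_fun_compose) (simp add: dq_target_def poly_add poly_mult poly_coord)

lemma poly_fun_dq:
  "poly_fun N p \<Longrightarrow> \<exists>p'. poly_fun (2 * N + 1) p' \<and>
     (\<forall>w. p (dq_target N w) - p (dq_base N w) = w ! (2 * N) * p' w)"
proof (induction rule: poly_fun.induct)
  case (poly_const a)
  show ?case
    by (intro exI[of _ "\<lambda>w. 0"] conjI poly_fun.poly_const) simp
next
  case (poly_coord i)
  then show ?case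
    by (intro exI[of _ "\<lambda>w. w ! (N + i)"] conjI poly_fun.poly_coord)
      (auto simp: dq_target_def dq_base_def)
next
  case (poly_add p q)
  then obtain p' q' where "poly_fun (2 * N + 1) p'" "\<forall>w. p (dq_target N w) - p (dq_base N w) = w ! (2 * N) * p' w"
    "poly_fun (2 * N + 1) q'" "\<forall>w. q (dq_target N w) - q (dq_base N w) = w ! (2 * N) * q' w"
    by auto
  then show ?case
    by (intro exI[of _ "\<lambda>w. p' w + q' w"] conjI poly_fun.poly_add) (auto simp: algebra_simps)
next
  case (poly_mult p q)
  then obtain p' q' where p': "poly_fun (2 * N + 1) p'" "\<forall>w. p (dq_target N w) - p (dq_base N w) = w ! (2 * N) * p' w"
    and q': "poly_fun (2 * N + 1) q'" "\<forall>w. q (dq_target N w) - q (dq_base N w) = w ! (2 * N) * q' w"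
    by auto
  have "p (dq_target N w) * q (dq_target N w) - p (dq_base N w) * q (dq_base N w)
      = (p (dq_target N w) - p (dq_base N w)) * q (dq_target N w)
        + p (dq_base N w) * (q (dq_target N w) - q (dq_base N w))" for w
    by (simp add: algebra_simps)
  then have "p (dq_target N w) * q (dq_target N w) - p (dq_base N w) * q (dq_base N w)
      = w ! (2 * N) * (p' w * q (dq_target N w) + p (dq_base N w) * q' w)" for w
    using p'(2) q'(2) by (simp add: algebra_simps)
  moreover have "poly_fun (2 * N + 1) (\<lambda>w. p' w * q (dq_target N w) + p (dq_base N w) * q' w)"
    using p'(1) q'(1) poly_fun_dq_target[OF poly_mult.hyps(2)] poly_fun_dq_base[OF poly_mult.hyps(1)]
    by (intro poly_fun.poly_add poly_fun.poly_mult)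
  ultimately show ?case
    by blast
qed

lemma (in ultrametric_absval) scalar_cont_at_poly_fun:
  "poly_fun N p \<Longrightarrow> length u0 = N \<Longrightarrow> scalar_cont_at av p u0"
  by (induction rule: poly_fun.induct)
    (auto intro: scalar_cont_at_const scalar_cont_at_nth scalar_cont_at_add scalar_cont_at_mult)

context radial_map
begin

inductive dq_expr :: "nat \<Rightarrow> ('k list \<Rightarrow> 'e) \<Rightarrow> bool" for N where
  dq_const: "dq_expr N (\<lambda>w. e)"
| dq_term: "poly_fun N p \<Longrightarrow> \<forall>q\<in>set qs. poly_fun N q \<Longrightarrow>
    dq_expr N (\<lambda>w. sc (p w) (dd_list (map (\<lambda>q. q w) qs)))"
| dq_add: "dq_expr N F \<Longrightarrow> dq_expr N G \<Longrightarrow> dq_expr N (\<lambda>w. F w + G w)"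

lemma dq_expr_sum:
  "(\<And>i. i < n \<Longrightarrow> dq_expr N (F i)) \<Longrightarrow> dq_expr N (\<lambda>w. \<Sum>i<(n::nat). F i w)"
  by (induction n) (auto intro: dq_expr.intros)

lemma dq_expr_dd_list_dq:
  assumes \<kappa>: "poly_fun (2 * N + 1) \<kappa>" and qs: "\<forall>q\<in>set qs. poly_fun N q"
  shows "\<exists>G. dq_expr (2 * N + 1) G \<and> (\<forall>w. sc (\<kappa> w) (dd_list (map (\<lambda>q. q (dq_target N w)) qs)
     - dd_list (map (\<lambda>q. q (dq_base N w)) qs)) = sc (w ! (2 * N)) (G w))"
proof -
  define S :: "'k list \<Rightarrow> 'k list" where "S = dq_target N"
  define B :: "'k list \<Rightarrow> 'k list" where "B = dq_base N"
  have "\<forall>i\<in>{..<length qs}. \<exists>q'. poly_fun (2 * N + 1) q' \<and>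
      (\<forall>w. (qs ! i) (S w) - (qs ! i) (B w) = w ! (2 * N) * q' w)"
    using qs poly_fun_dq unfolding S_def B_def by (meson lessThan_iff nth_mem)
  then obtain Q' where Q': "\<And>i. i < length qs \<Longrightarrow> poly_fun (2 * N + 1) (Q' i)"
    "\<And>i w. i < length qs \<Longrightarrow> (qs ! i) (S w) - (qs ! i) (B w) = w ! (2 * N) * Q' i w"
    using bchoice[of "{..<length qs}"] by (metis lessThan_iff)
  define R where "R i = take i (map (\<lambda>q w. q (S w)) qs) @ [\<lambda>w. (qs ! i) (B w), \<lambda>w. (qs ! i) (S w)]
    @ drop (Suc i) (map (\<lambda>q w. q (B w)) qs)" for i
  have "poly_fun (2 * N + 1) (\<lambda>w. q (S w))" "poly_fun (2 * N + 1) (\<lambda>w. q (B w))"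
    if "q \<in> set qs" for q
    using qs that unfolding S_def B_def by (blast intro: poly_fun_dq_target poly_fun_dq_base)+
  then have R_poly: "\<forall>r\<in>set (R i). poly_fun (2 * N + 1) r" if "i < length qs" for i
    using nth_mem[OF that] unfolding R_def by (auto dest!: in_set_takeD in_set_dropD)
  define G where "G w = (\<Sum>i<length qs. sc (\<kappa> w * Q' i w) (dd_list (map (\<lambda>r. r w) (R i))))" for w
  have "dq_expr (2 * N + 1) G"
    unfolding G_def using Q'(1) R_poly \<kappa> by (intro dq_expr_sum dq_term poly_mult)
  moreover have "sc (\<kappa> w) (dd_list (map (\<lambda>q. q (S w)) qs) - dd_list (map (\<lambda>q. q (B w)) qs))
      = sc (w ! (2 * N)) (G w)" for w
    using dd_list_telescope[of "map (\<lambda>q. q (S w)) qs" "map (\<lambda>q. q (B w)) qs" "[]"] Q'(2)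
    by (simp add: R_def G_def take_map drop_map comp_def scale_sum_right mult.left_commute)
  ultimately show ?thesis
    unfolding S_def B_def by blast
qed

lemma dq_expr_term_dq:
  assumes p: "poly_fun N p" and qs: "\<forall>q\<in>set qs. poly_fun N q"
  shows "\<exists>G. dq_expr (2 * N + 1) G \<and> (\<forall>w.
     sc (p (dq_target N w)) (dd_list (map (\<lambda>q. q (dq_target N w)) qs))
     - sc (p (dq_base N w)) (dd_list (map (\<lambda>q. q (dq_base N w)) qs)) = sc (w ! (2 * N)) (G w))"
proof -
  let ?A = "\<lambda>w. dd_list (map (\<lambda>q. q (dq_target N w)) qs)"
  let ?B = "\<lambda>w. dd_list (map (\<lambda>q. q (dq_base N w)) qs)"
  obtain p' where p': "poly_fun (2 * N + 1) p'"
    "\<And>w. p (dq_target N w) - p (dq_base N w) = w ! (2 * N) * p' w"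
    using poly_fun_dq[OF p] by blast
  obtain G where G: "dq_expr (2 * N + 1) G"
    "\<And>w. sc (p (dq_base N w)) (?A w - ?B w) = sc (w ! (2 * N)) (G w)"
    using dq_expr_dd_list_dq[OF poly_fun_dq_base[OF p] qs] by blast
  have "dq_expr (2 * N + 1) (\<lambda>w. sc (p' w) (dd_list (map (\<lambda>q. q w) (map (\<lambda>q w. q (dq_target N w)) qs))))"
    using p'(1) qs poly_fun_dq_target[of N] by (intro dq_term) auto
  then have "dq_expr (2 * N + 1) (\<lambda>w. sc (p' w) (?A w) + G w)"
    using G(1) by (intro dq_add) (simp_all add: comp_def)
  moreover have "sc (p (dq_target N w)) (?A w) - sc (p (dq_base N w)) (?B w)
      = sc (w ! (2 * N)) (sc (p' w) (?A w) + G w)" for w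
  proof -
    have "sc (p (dq_target N w)) (?A w) - sc (p (dq_base N w)) (?B w)
        = sc (p (dq_target N w) - p (dq_base N w)) (?A w) + sc (p (dq_base N w)) (?A w - ?B w)"
      by (simp add: scale_left_diff_distrib scale_right_diff_distrib)
    then show ?thesis
      unfolding p'(2) G(2) by (simp add: scale_right_distrib)
  qed
  ultimately show ?thesis
    by blast
qed

lemma dq_expr_dq:
  "dq_expr N F \<Longrightarrow> \<exists>F'. dq_expr (2 * N + 1) F' \<and>
     (\<forall>w. F (dq_target N w) - F (dq_base N w) = sc (w ! (2 * N)) (F' w))"
proof (induction rule: dq_expr.induct)
  case (dq_const e)
  show ?case
    by (intro exI[of _ "\<lambda>w. 0"] conjI dq_expr.dq_const) simp
next
  case (dq_term p qs)
  then show ?case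
    by (rule dq_expr_term_dq)
next
  case (dq_add F G)
  then obtain F' G' where "dq_expr (2 * N + 1) F'" "\<forall>w. F (dq_target N w) - F (dq_base N w) = sc (w ! (2 * N)) (F' w)"
    "dq_expr (2 * N + 1) G'" "\<forall>w. G (dq_target N w) - G (dq_base N w) = sc (w ! (2 * N)) (G' w)"
    by auto
  then show ?case
    by (intro exI[of _ "\<lambda>w. F' w + G' w"] conjI dq_expr.dq_add) (auto simp: scale_right_distrib algebra_simps)
qed

end

lemma (in flat_radial_map) cont_at_dq_expr: "dq_expr N F \<Longrightarrow> length u0 = N \<Longrightarrow> cont_at av TE F u0"
proof (induction rule: dq_expr.induct)
  case (dq_const e)
  show ?case
    by (rule cont_at_const)
next
  case (dq_term p qs)
  have "\<forall>q\<in>set qs. scalar_cont_at av q u0"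
    using scalar_cont_at_poly_fun dq_term by blast
  then have "cont_at av TE (\<lambda>w. dd_list (map (\<lambda>q. q w) qs)) u0"
    by (rule cont_at_compose[where g = dd_list, OF cont_at_dd_list coords_close_map])
  then show ?case
    using scalar_cont_at_poly_fun dq_term by (intro cont_at_scale) auto
next
  case (dq_add F G)
  then show ?case
    by (intro cont_at_add) auto
qed

section \<open>Smoothness\<close>

context ultrametric_absval
begin

lemma coords_close_if_ldist_less:
  assumes "length a = length b" "ldist av a b < r"
  shows "coords_close av r a b"
  unfolding coords_close_iff
proof (intro conjI allI impI)
  fix i assume i: "i < length a"
  have "av (a ! i - b ! i) \<in> set (0 # map2 (\<lambda>x y. av (x - y)) a b)"
    using i assms(1) by (auto simp: set_zip in_set_conv_nth intro!: exI[of _ i])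
  then have "av (a ! i - b ! i) \<le> ldist av a b"
    unfolding ldist_def by (intro Max_ge) auto
  then show "av (b ! i - a ! i) < r"
    using assms(2) av_minus_commute by fastforce
qed (use assms(1) in simp)

lemma cont_on_if_cont_at:
  assumes "\<And>u. u \<in> D \<Longrightarrow> cont_at av X f u" "\<And>u v. u \<in> D \<Longrightarrow> v \<in> D \<Longrightarrow> length u = length v"
  shows "cont_on av X D f"
  unfolding cont_on_def
proof (intro ballI allI impI)
  fix u W assume "u \<in> D" "openin X W \<and> f u \<in> W"
  then obtain r where "r > 0" "\<And>v. coords_close av r u v \<Longrightarrow> f v \<in> W"
    using assms(1) cont_atE by metis
  then show "\<exists>r>0. \<forall>v\<in>D. ldist av u v < r \<longrightarrow> f v \<in> W"
    using assms(2) \<open>u \<in> D\<close> coords_close_if_ldist_less by blast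
qed

end

primrec dom_len :: "nat \<Rightarrow> nat" where
  "dom_len 0 = 1"
| "dom_len (Suc k) = 2 * dom_len k + 1"

lemma dom1_length: "dom1 {w :: 'k::field list. length w = N} = {w. length w = 2 * N + 1}"
proof (intro set_eqI iffI)
  fix w :: "'k list" assume "w \<in> dom1 {w. length w = N}"
  then show "w \<in> {w. length w = 2 * N + 1}"
    unfolding dom1_def by auto
next
  fix w :: "'k list" assume "w \<in> {w. length w = 2 * N + 1}"
  then have len: "length w = 2 * N + 1"
    by simp
  define t where "t = last w"
  have "w = take N w @ take N (drop N w) @ [t]"
  proof -
    have "w = butlast w @ [t]"
      using len unfolding t_def by (metis append_butlast_last_id list.size(3) add_is_0 one_neq_zero)
    moreover have "butlast w = take (N + N) w"
      using len by (simp add: butlast_conv_take mult_2)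
    ultimately show ?thesis
      by (metis take_add append_assoc)
  qed
  then show "w \<in> dom1 {w. length w = N}"
    unfolding dom1_def using len
    by (intro CollectI exI[of _ "take N w"] exI[of _ "take N (drop N w)"] exI[of _ t]) auto
qed

lemma cdom_eq: "cdom k = {w :: 'k::field list. length w = dom_len k}"
  by (induction k) (simp_all add: dom1_length)

lemma dq_base_append: "length xs = N \<Longrightarrow> dq_base N (xs @ vs @ [t]) = xs"
  unfolding dq_base_def by simp

lemma dq_target_append:
  "length xs = N \<Longrightarrow> length vs = N \<Longrightarrow> dq_target N (xs @ vs @ [t]) = map2 (\<lambda>x v. x + t * v) xs vs"
  unfolding dq_target_def by (intro nth_equalityI) (auto simp: nth_append)

context radial_map
begin

text \<open>The difference quotients \<open>g\<^bsup>[k]\<^esup>\<close> of \<open>g(t) = x + h(t)\<close>; \<open>dq_expr_dq\<close> guarantees that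
  the choice succeeds.\<close>

primrec curve_dq :: "'e \<Rightarrow> nat \<Rightarrow> 'k list \<Rightarrow> 'e" where
  "curve_dq x 0 = (\<lambda>w. x + dd_list [w ! 0])"
| "curve_dq x (Suc k) = (SOME F'. dq_expr (2 * dom_len k + 1) F' \<and>
     (\<forall>w. curve_dq x k (dq_target (dom_len k) w) - curve_dq x k (dq_base (dom_len k) w)
        = sc (w ! (2 * dom_len k)) (F' w)))"

lemma curve_dq_Suc:
  assumes "dq_expr (dom_len k) (curve_dq x k)"
  shows "dq_expr (dom_len (Suc k)) (curve_dq x (Suc k))"
    and "curve_dq x k (dq_target (dom_len k) w) - curve_dq x k (dq_base (dom_len k) w)
      = sc (w ! (2 * dom_len k)) (curve_dq x (Suc k) w)"
proof -
  have spec: "dq_expr (2 * dom_len k + 1) (curve_dq x (Suc k)) \<and>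
    (\<forall>w. curve_dq x k (dq_target (dom_len k) w) - curve_dq x k (dq_base (dom_len k) w)
        = sc (w ! (2 * dom_len k)) (curve_dq x (Suc k) w))"
    unfolding curve_dq.simps(2) by (rule someI_ex[OF dq_expr_dq[OF assms]])
  then show "dq_expr (dom_len (Suc k)) (curve_dq x (Suc k))"
    unfolding dom_len.simps by (rule conjunct1)
  show "curve_dq x k (dq_target (dom_len k) w) - curve_dq x k (dq_base (dom_len k) w)
      = sc (w ! (2 * dom_len k)) (curve_dq x (Suc k) w)"
    using spec by blast
qed

lemma dq_expr_curve_dq: "dq_expr (dom_len k) (curve_dq x k)"
proof (induction k)
  case 0
  have "dq_expr 1 (\<lambda>w. sc 1 (dd_list (map (\<lambda>q. q w) [\<lambda>w. w ! 0])))"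
    by (rule dq_term) (simp_all add: poly_const poly_coord)
  then have "dq_expr 1 (\<lambda>w. x + sc 1 (dd_list (map (\<lambda>q. q w) [\<lambda>w. w ! 0])))"
    by (rule dq_add[OF dq_const])
  then show ?case
    by simp
next
  case (Suc k)
  then show ?case
    by (rule curve_dq_Suc)
qed

end

theorem (in flat_radial_map) smooth_curve_translate: "smooth_curve av sc TE (\<lambda>t. x + h t)"
  unfolding smooth_curve_def
proof (intro exI[of _ "curve_dq x"] conjI allI impI)
  show "curve_dq x 0 [t] = x + h t" for t
    by simp
  show "cont_on av TE (cdom k) (curve_dq x k)" for k
    by (rule cont_on_if_cont_at) (auto simp: cdom_eq intro: cont_at_dq_expr[OF dq_expr_curve_dq])
  fix k and xs vs :: "'k list" and t :: 'k
  assume "xs @ vs @ [t] \<in> cdom (Suc k) \<and> length vs = length xs"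
  then have len: "length xs = dom_len k" "length vs = dom_len k"
    by (auto simp: cdom_eq)
  then show "curve_dq x k (map2 (\<lambda>x v. x + t * v) xs vs) - curve_dq x k xs
      = sc t (curve_dq x (Suc k) (xs @ vs @ [t]))"
    using curve_dq_Suc(2)[OF dq_expr_curve_dq[of k x], of "xs @ vs @ [t]"]
    by (simp add: dq_base_append dq_target_append nth_append)
qed

section \<open>The curve\<close>

lemma metrizable_nested_nhds:
  assumes "metrizable_space X" "a \<in> topspace X"
  obtains B :: "nat \<Rightarrow> 'a set" where "\<And>k. openin X (B k)" "\<And>k. a \<in> B k"
    and "\<And>W. openin X W \<Longrightarrow> a \<in> W \<Longrightarrow> \<exists>K. \<forall>k\<ge>K. B k \<subseteq> W"
proof -
  obtain M d where "Metric_space M d" and X: "X = Metric_space.mtopology M d"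
    using assms(1) unfolding metrizable_space_def by blast
  interpret Metric_space M d
    by fact
  show thesis
  proof (rule that[of "\<lambda>k. mball a (inverse (real (Suc k)))"])
    show "openin X (mball a (inverse (real (Suc k))))" "a \<in> mball a (inverse (real (Suc k)))" for k
      using assms(2) by (auto simp: X)
    fix W assume "openin X W" "a \<in> W"
    then obtain r where r: "r > 0" "mball a r \<subseteq> W"
      unfolding X openin_mtopology by blast
    then obtain K where K: "inverse (real (Suc K)) < r"
      using reals_Archimedean by blast
    have "mball a (inverse (real (Suc k))) \<subseteq> W" if "K \<le> k" for k
    proof -
      have "inverse (real (Suc k)) \<le> inverse (real (Suc K))"
        using that by (simp add: field_simps)
      then have "mball a (inverse (real (Suc k))) \<subseteq> mball a r"
        using K by (intro mball_subset_concentric) linarith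
      then show ?thesis
        using r(2) by blast
    qed
    then show "\<exists>K. \<forall>k\<ge>K. mball a (inverse (real (Suc k))) \<subseteq> W"
      by blast
  qed
qed

lemma strict_mono_choice:
  assumes "\<And>k. \<exists>N. \<forall>n\<ge>N. P k n"
  obtains m :: "nat \<Rightarrow> nat" where "strict_mono m" "\<And>k. P k (m k)"
proof -
  have "\<exists>m. \<forall>k. P k (m k) \<and> m k < m (Suc k)"
  proof (rule dependent_nat_choice)
    show "\<exists>n. P 0 n"
      using assms[of 0] by blast
    fix n k
    obtain N where "\<forall>n'\<ge>N. P (Suc k) n'"
      using assms by blast
    then show "\<exists>n'. P (Suc k) n' \<and> n < n'"
      by (intro exI[of _ "max N (Suc n)"]) auto
  qed
  then show thesis
    using that strict_monoI_Suc by blast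
qed

context valued_tvs
begin

lemma continuous_map_scale_left: "continuous_map TE TE (\<lambda>z. sc l z)"
proof -
  have "continuous_map TE (prod_topology (abs_topology av) TE) (\<lambda>z. (l, z))"
    by (intro continuous_map_pairedI) (auto simp: continuous_map_id[unfolded id_def])
  then have "continuous_map TE TE ((\<lambda>(t, v). sc t v) \<circ> (\<lambda>z. (l, z)))"
    using continuous_scale by (rule continuous_map_compose)
  then show ?thesis
    by (simp add: comp_def)
qed

lemma continuous_map_add_right: "continuous_map TE TE (\<lambda>z. z + a)"
proof -
  have "continuous_map TE (prod_topology TE TE) (\<lambda>z. (z, a))"
    using topspace_TE by (intro continuous_map_pairedI) (auto simp: continuous_map_id[unfolded id_def])
  then have "continuous_map TE TE ((\<lambda>(x, y). x + y) \<circ> (\<lambda>z. (z, a)))"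
    using continuous_add by (rule continuous_map_compose)
  then show ?thesis
    by (simp add: comp_def)
qed

lemma scaled_nbhd:
  assumes "openin TE W" "0 \<in> W"
  obtains V where "openin TE V" "0 \<in> V" "\<And>z c. z \<in> V \<Longrightarrow> av c \<le> R \<Longrightarrow> sc c z \<in> W"
proof -
  obtain A B where AB: "openin (abs_topology av) A" "openin TE B" "0 \<in> A" "0 \<in> B"
    and scale: "\<And>t v. t \<in> A \<Longrightarrow> v \<in> B \<Longrightarrow> sc t v \<in> W"
    using continuous_map_pair_nbhds[OF continuous_scale assms(1), of 0 0] assms(2) topspace_TE by auto
  obtain d where d: "d > 0" "\<And>y. av y < d \<Longrightarrow> y \<in> A"
    using AB(1,3) unfolding openin_abs_topology by force
  obtain l where l: "l \<noteq> 0" "av l < d / (\<bar>R\<bar> + 1)"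
    using exists_small_nonzero[of "d / (\<bar>R\<bar> + 1)"] d(1) by auto
  show thesis
  proof (rule that)
    show "openin TE {z \<in> topspace TE. sc (inverse l) z \<in> B}"
      by (rule openin_continuous_map_preimage[OF continuous_map_scale_left AB(2)])
    show "0 \<in> {z \<in> topspace TE. sc (inverse l) z \<in> B}"
      using AB(4) topspace_TE by simp
    fix z c assume z: "z \<in> {z \<in> topspace TE. sc (inverse l) z \<in> B}" and c: "av c \<le> R"
    have "av (c * l) \<le> (\<bar>R\<bar> + 1) * av l"
      using c av_nonneg[of l] by (simp add: av_mult mult_right_mono)
    also have "\<dots> < d"
      using l(2) by (simp add: field_simps)
    finally have "c * l \<in> A"
      by (rule d(2))
    moreover have "sc (inverse l) z \<in> B"
      using z by simp
    ultimately have "sc (c * l) (sc (inverse l) z) \<in> W"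
      by (rule scale)
    then show "sc c z \<in> W"
      using l(1) by (simp add: mult.assoc)
  qed
qed

lemma eventually_scaled_diff_in:
  assumes "limitin TE s x sequentially" "openin TE W" "0 \<in> W"
  shows "\<exists>N. \<forall>n\<ge>N. \<forall>c. av c \<le> R \<longrightarrow> sc c (s n - x) \<in> W"
proof -
  obtain V where V: "openin TE V" "0 \<in> V" and scale: "\<And>z c. z \<in> V \<Longrightarrow> av c \<le> R \<Longrightarrow> sc c z \<in> W"
    using scaled_nbhd[OF assms(2,3)] by blast
  have "openin TE {y \<in> topspace TE. y + (- x) \<in> V}"
    by (rule openin_continuous_map_preimage[OF continuous_map_add_right V(1)])
  moreover have "x \<in> {y \<in> topspace TE. y + (- x) \<in> V}"
    using V(2) topspace_TE by simp
  ultimately have "eventually (\<lambda>n. s n - x \<in> V) sequentially"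
    using assms(1) unfolding limitin_def by (auto elim: eventually_mono)
  then show ?thesis
    using scale unfolding eventually_sequentially by blast
qed

lemma scaled_close_subsequence:
  assumes "\<And>k. limitin TE (s k) x sequentially" "\<And>k. openin TE (B k)" "\<And>k. 0 \<in> B k"
  obtains m :: "nat \<Rightarrow> nat" where "strict_mono m"
    "\<And>k c. av c \<le> R k \<Longrightarrow> sc c (s k (m k) - x) \<in> B k"
proof -
  have "\<exists>N. \<forall>n\<ge>N. \<forall>c. av c \<le> R k \<longrightarrow> sc c (s k n - x) \<in> B k" for k
    by (rule eventually_scaled_diff_in[OF assms])
  then obtain m where "strict_mono m" "\<And>k. \<forall>c. av c \<le> R k \<longrightarrow> sc c (s k (m k) - x) \<in> B k"
    by (rule strict_mono_choice[where P = "\<lambda>k n. \<forall>c. av c \<le> R k \<longrightarrow> sc c (s k n - x) \<in> B k"])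
      blast
  then show thesis
    using that by blast
qed

end

definition shell :: "('k::field \<Rightarrow> real) \<Rightarrow> 'k \<Rightarrow> 'k \<Rightarrow> nat" where
  "shell av \<rho> t = (LEAST k. 1 \<le> k \<and> av \<rho> ^ (k + 1) < av t)"

text \<open>The curve of the theorem: it is \<open>x\<close> at \<open>0\<close> and takes the value \<open>y\<^sub>k\<close> on the shell
  \<open>|\<rho>|\<^bsup>k+1\<^esup> < |t| \<le> |\<rho>|\<^sup>k\<close> (for \<open>k = 1\<close>, on all of \<open>|\<rho>|\<^sup>2 < |t|\<close>).\<close>

definition shell_fun :: "('k::field \<Rightarrow> real) \<Rightarrow> 'k \<Rightarrow> 'e \<Rightarrow> (nat \<Rightarrow> 'e) \<Rightarrow> 'k \<Rightarrow> 'e" where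
  "shell_fun av \<rho> x y t = (if t = 0 then x else y (shell av \<rho> t))"

lemma shell_fun_0 [simp]: "shell_fun av \<rho> x y 0 = x"
  by (simp add: shell_fun_def)

context ultrametric_absval
begin

lemma shell_fun_radial:
  assumes "av t = av s"
  shows "shell_fun av \<rho> x y t = shell_fun av \<rho> x y s"
proof -
  have "t = 0 \<longleftrightarrow> s = 0"
    using assms by (metis av_eq_0_iff)
  moreover have "shell av \<rho> t = shell av \<rho> s"
    unfolding shell_def using assms by simp
  ultimately show ?thesis
    unfolding shell_fun_def by simp
qed

lemma shell_fun_locally_const:
  "t \<noteq> 0 \<Longrightarrow> av (s - t) < av t \<Longrightarrow> shell_fun av \<rho> x y s = shell_fun av \<rho> x y t"
  by (rule shell_fun_radial[OF av_eq_if_close])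

context
  fixes \<rho> :: 'k
  assumes \<rho>: "0 < av \<rho>" "av \<rho> < 1"
begin

lemma shell:
  assumes "t \<noteq> 0"
  shows "1 \<le> shell av \<rho> t" "av \<rho> ^ (shell av \<rho> t + 1) < av t"
proof -
  obtain n where n: "av \<rho> ^ n < av t"
    using real_arch_pow_inv[OF av_pos[OF assms] \<rho>(2)] by blast
  have "av \<rho> ^ (max 1 n + 1) \<le> av \<rho> ^ n"
    using \<rho> by (intro power_decreasing) auto
  then have "\<exists>k. 1 \<le> k \<and> av \<rho> ^ (k + 1) < av t"
    using n by (intro exI[of _ "max 1 n"]) auto
  then have "1 \<le> shell av \<rho> t \<and> av \<rho> ^ (shell av \<rho> t + 1) < av t"
    unfolding shell_def by (rule LeastI_ex)
  then show "1 \<le> shell av \<rho> t" "av \<rho> ^ (shell av \<rho> t + 1) < av t"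
    by auto
qed

lemma shell_power: "1 \<le> k \<Longrightarrow> shell av \<rho> (\<rho> ^ k) = k"
  unfolding shell_def
proof (rule Least_equality)
  show "1 \<le> k \<Longrightarrow> 1 \<le> k \<and> av \<rho> ^ (k + 1) < av (\<rho> ^ k)"
    using \<rho> by (simp add: av_power)
  fix l assume "1 \<le> l \<and> av \<rho> ^ (l + 1) < av (\<rho> ^ k)"
  then have "av \<rho> ^ (l + 1) < av \<rho> ^ k"
    by (simp add: av_power)
  then have "k < l + 1"
    using power_strict_decreasing_iff[OF \<rho>, of "l + 1" k] by blast
  then show "k \<le> l"
    by simp
qed

lemma shell_gt: "t \<noteq> 0 \<Longrightarrow> av t < av \<rho> ^ (K + 1) \<Longrightarrow> K < shell av \<rho> t"
  using shell(2)[of t] power_strict_decreasing_iff[OF \<rho>, of "shell av \<rho> t + 1" "K + 1"] by simp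

lemma shell_scalar_bound:
  assumes t: "t \<noteq> 0" and c: "av c * av t ^ j \<le> 1" and j: "j \<le> shell av \<rho> t"
  shows "av c \<le> inverse (av \<rho>) ^ ((shell av \<rho> t + 1) * shell av \<rho> t)"
proof -
  define k where "k = shell av \<rho> t"
  have pos: "0 < av t ^ j" "0 < (av \<rho> ^ (k + 1)) ^ j"
    using av_pos[OF t] \<rho> by simp_all
  have "av c \<le> 1 / av t ^ j"
    using c pos(1) by (simp add: field_simps)
  also have "\<dots> \<le> 1 / (av \<rho> ^ (k + 1)) ^ j"
    using shell(2)[OF t] \<rho> pos by (intro divide_left_mono power_mono) (auto simp: k_def)
  also have "\<dots> = inverse (av \<rho>) ^ ((k + 1) * j)"
    by (simp only: power_mult power_inverse divide_inverse mult_1_left)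
  also have "\<dots> \<le> inverse (av \<rho>) ^ ((k + 1) * k)"
    using \<rho> j by (intro power_increasing mult_le_mono2) (auto simp: k_def one_le_inverse)
  finally show ?thesis
    unfolding k_def .
qed

lemma shell_fun_power:
  assumes "1 \<le> k"
  shows "shell_fun av \<rho> x y (\<rho> ^ k) = y k"
proof -
  have "\<rho> \<noteq> 0"
    using \<rho> by auto
  then show ?thesis
    using shell_power[OF assms] by (simp add: shell_fun_def)
qed

lemma shell_fun_range: "shell_fun av \<rho> x y t \<in> insert x {y k |k. 1 \<le> k}"
  using shell(1) by (auto simp: shell_fun_def)

lemma shell_fun_image:
  "shell_fun av \<rho> x y ` (UNIV - {0}) = {shell_fun av \<rho> x y (\<rho> ^ k) |k. 1 \<le> k}"
proof (intro set_eqI iffI)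
  fix z assume "z \<in> shell_fun av \<rho> x y ` (UNIV - {0})"
  then obtain t where t: "t \<noteq> 0" "z = shell_fun av \<rho> x y t"
    by auto
  then have "z = y (shell av \<rho> t)"
    by (simp add: shell_fun_def)
  also have "\<dots> = shell_fun av \<rho> x y (\<rho> ^ shell av \<rho> t)"
    by (rule shell_fun_power[symmetric, OF shell(1)[OF t(1)]])
  finally show "z \<in> {shell_fun av \<rho> x y (\<rho> ^ k) |k. 1 \<le> k}"
    using shell(1)[OF t(1)] by blast
next
  fix z assume "z \<in> {shell_fun av \<rho> x y (\<rho> ^ k) |k. 1 \<le> k}"
  moreover have "\<rho> ^ k \<noteq> 0" for k
    using \<rho> by auto
  ultimately show "z \<in> shell_fun av \<rho> x y ` (UNIV - {0})"
    by blast
qed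

end

end

lemma (in valued_tvs) flat_radial_map_shell_fun:
  assumes \<rho>: "0 < av \<rho>" "av \<rho> < 1"
    and B: "\<And>W. openin TE W \<Longrightarrow> 0 \<in> W \<Longrightarrow> \<exists>K. \<forall>k\<ge>K. B k \<subseteq> W"
    and y: "\<And>k c. 1 \<le> k \<Longrightarrow> av c \<le> inverse (av \<rho>) ^ ((k + 1) * k) \<Longrightarrow> sc c (y k - x) \<in> B k"
  shows "flat_radial_map av sc (\<lambda>t. shell_fun av \<rho> x y t - x) TE"
proof unfold_locales
  show "shell_fun av \<rho> x y a - x = shell_fun av \<rho> x y b - x" if "av a = av b" for a b
    using shell_fun_radial[OF that] by simp
  show "shell_fun av \<rho> x y 0 - x = 0"
    by simp
  fix W j assume W: "openin TE W" "0 \<in> W"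
  obtain K where K: "\<forall>k\<ge>K. B k \<subseteq> W"
    using B[OF W] by blast
  have "sc c (shell_fun av \<rho> x y w - x) \<in> W"
    if w: "av w < av \<rho> ^ (max K j + 1)" and c: "av c * av w ^ j \<le> 1" for w c
  proof (cases "w = 0")
    case True
    then show ?thesis
      using W(2) by simp
  next
    case False
    have k: "max K j < shell av \<rho> w"
      using shell_gt[OF \<rho> False w] .
    then have "sc c (y (shell av \<rho> w) - x) \<in> B (shell av \<rho> w)"
      using y shell_scalar_bound[OF \<rho> False c] by simp
    moreover have "B (shell av \<rho> w) \<subseteq> W"
      using K k by simp
    ultimately show ?thesis
      using False by (auto simp: shell_fun_def)
  qed
  then show "\<exists>\<epsilon>>0. \<forall>w c. av w < \<epsilon> \<longrightarrow> av c * av w ^ j \<le> 1 \<longrightarrow> sc c (shell_fun av \<rho> x y w - x) \<in> W"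
    using \<rho> by (intro exI[of _ "av \<rho> ^ (max K j + 1)"]) auto
qed

lemma valued_tvs_if_metrizable_tvs:
  "ultrametric_abs av \<Longrightarrow> metrizable_tvs av sc TE \<Longrightarrow> valued_tvs av sc TE"
  unfolding valued_tvs_def valued_tvs_axioms_def ultrametric_absval_def metrizable_tvs_def by blast

theorem lemma11p1:
  fixes av :: "'k::field \<Rightarrow> real" and \<rho> :: 'k
    and sc :: "'k \<Rightarrow> 'e::ab_group_add \<Rightarrow> 'e" and TE :: "'e topology"
    and U :: "'e set" and x :: 'e and xs ys :: "nat \<Rightarrow> 'e"
  assumes "ultrametric_abs av"
    and "0 < av \<rho>" and "av \<rho> < 1"
    and "metrizable_tvs av sc TE"
    and "openin TE U" and "x \<in> U"
    and "\<forall>n\<ge>1. xs n \<in> U" and "\<forall>n\<ge>1. ys n \<in> U"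
    and "limitin TE xs x sequentially" and "limitin TE ys x sequentially"
  shows "\<exists>(m :: nat \<Rightarrow> nat) (c :: 'k \<Rightarrow> 'e).
           strict_mono_on {1..} m \<and> (\<forall>k\<ge>1. m k \<ge> 1) \<and>
           smooth_curve av sc TE c \<and> (\<forall>t. c t \<in> U) \<and>
           (\<forall>k\<ge>1. odd k \<longrightarrow> c (\<rho> ^ k) = xs (m k)) \<and>
           (\<forall>k\<ge>1. even k \<longrightarrow> c (\<rho> ^ k) = ys (m k)) \<and>
           c 0 = x \<and>
           (\<forall>t. t \<noteq> 0 \<longrightarrow> (\<exists>r>0. \<forall>s. av (s - t) < r \<longrightarrow> c s = c t)) \<and>
           (\<forall>t s. av t = av s \<longrightarrow> c t = c s) \<and>
           c ` (UNIV - {0}) = {c (\<rho> ^ k) | k. k \<ge> 1}"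
proof -
  interpret valued_tvs av sc TE
    using valued_tvs_if_metrizable_tvs[OF assms(1,4)] .
  obtain B :: "nat \<Rightarrow> 'e set" where B: "\<And>k. openin TE (B k)" "\<And>k. 0 \<in> B k"
    "\<And>W. openin TE W \<Longrightarrow> 0 \<in> W \<Longrightarrow> \<exists>K. \<forall>k\<ge>K. B k \<subseteq> W"
    using metrizable_nested_nhds[of TE 0] assms(4) topspace_TE by (auto simp: metrizable_tvs_def)
  define seq where "seq k = (if odd k then xs else ys)" for k :: nat
  have lim: "limitin TE (seq k) x sequentially" for k
    using assms(9,10) by (simp add: seq_def)
  obtain m where m: "strict_mono m"
    "\<And>k c. av c \<le> inverse (av \<rho>) ^ ((k + 1) * k) \<Longrightarrow> sc c (seq k (m k) - x) \<in> B k"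
    by (rule scaled_close_subsequence[where s = seq and B = B
          and R = "\<lambda>k. inverse (av \<rho>) ^ ((k + 1) * k)", OF lim B(1,2)]) iprover
  define y where "y k = seq k (m k)" for k
  interpret flat_radial_map av sc "\<lambda>t. shell_fun av \<rho> x y t - x" TE
    using flat_radial_map_shell_fun[OF assms(2,3) B(3)] m(2) by (simp add: y_def)
  have m_ge_1: "1 \<le> m k" if "1 \<le> k" for k
    using strict_mono_imp_increasing[OF m(1), of k] that by simp
  have c_power: "shell_fun av \<rho> x y (\<rho> ^ k) = seq k (m k)" if "1 \<le> k" for k
    using shell_fun_power[OF assms(2,3) that, of x y] by (simp add: y_def)
  show ?thesis
  proof (intro exI[of _ m] exI[of _ "shell_fun av \<rho> x y"] conjI allI impI)
    show "smooth_curve av sc TE (shell_fun av \<rho> x y)"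
      using smooth_curve_translate[of x] by simp
    show "shell_fun av \<rho> x y t \<in> U" for t
      using shell_fun_range[OF assms(2,3), of x y t] assms(6-8) m_ge_1 by (auto simp: y_def seq_def)
    show "\<exists>r>0. \<forall>s. av (s - t) < r \<longrightarrow> shell_fun av \<rho> x y s = shell_fun av \<rho> x y t"
      if "t \<noteq> 0" for t
      using that by (intro exI[of _ "av t"] conjI allI impI av_pos shell_fun_locally_const)
    show "shell_fun av \<rho> x y t = shell_fun av \<rho> x y s" if "av t = av s" for t s
      using that by (rule shell_fun_radial)
    show "shell_fun av \<rho> x y ` (UNIV - {0}) = {shell_fun av \<rho> x y (\<rho> ^ k) |k. 1 \<le> k}"
      by (rule shell_fun_image[OF assms(2,3)])
  qed (use m(1) m_ge_1 c_power in \<open>auto simp: seq_def strict_mono_on_def strict_mono_def\<close>)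
qed

end
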